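(* Let $N=n$ be prime, $f=x_1^N+\dots+x_N^N$, $S\subseteq S_N$, $G=S\ltimes\mathrm{SL}_f$. Let $\sigma=\prod_{a=1}^p\sigma_a\in S$ be a disjoint cycle decomposition (length-1 cycles included) with supports $I_a$, let $\widetilde x_{a}=\sum_{k\in I_a}x_k$, and let $X=\prod_{a=1}^p\lfloor\widetilde x_{a}^{r_a}\rfloor\xi_{\sigma_a}\in\mathcal A'_{f,\sigma}$ with $0\le r_a\le N-2$. For each $a$ let $k_a\in\{1,\dots,N-1\}$ be the unique integer with $r_a+1\equiv k_a|\sigma_a|\pmod N$. If $X$ is nonzero in $\mathcal A_{f,G}$, i.e. $X$ is invariant under $Z_G(\sigma)$, then $k_a=k_b$ for all $1\le a,b\le p$.
   Context: $\zeta=\exp(2\pi\sqrt{-1}/N)$; $t_k$ multiplies $x_k$ by $\zeta$; $G_f^d=\langle t_1,\dots,t_N\rangle$, $\mathrm{SL}_f=\{g\in G_f^d:\det g=1\}$; $S_N$ permutes coordinates. For $u\in S_N\ltimes G_f^d$: $\mathrm{Fix}(u)$ is the eigenvalue-1 subspace, $M_u$ the sum of the other eigenspaces, $\mathcal A'_{f,u}=\mathrm{Jac}(f|_{\mathrm{Fix}(u)})\,\xi_u$ with formal generator $\xi_u$; for a permutation $\sigma=\prod_a\sigma_a$ one writes $\xi_\sigma=\prod_a\xi_{\sigma_a}$ and $\lfloor\prod_a\widetilde x_a^{r_a}\rfloor\xi_\sigma=\prod_a\lfloor\widetilde x_a^{r_a}\rfloor\xi_{\sigma_a}$. For $v\in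 Z_G(u)$, $v^*(\lfloor\phi(\mathbf x)\rfloor\xi_u)=\det(v|_{M_u})^{-1}\lfloor\phi(v\cdot\mathbf x)\rfloor\xi_u$. The phase space is $\mathcal A_{f,G}=\bigoplus_{u\in\mathcal C^G}(\mathcal A'_{f,u})^{Z_G(u)}$, $\mathcal C^G$ a set of conjugacy class representatives. *)

theory Defs
  imports Complex_Main "Jordan_Normal_Form.Determinant" "HOL-Combinatorics.Permutations"
begin

text \<open>Coordinates are indexed by 0..N-1; vectors are complex vectors of dimension N,
  group elements are N x N complex matrices acting on column vectors.\<close>

definition zeta :: "nat \<Rightarrow> complex" where
  "zeta N = cis (2 * pi / real N)"

definition perm_mat :: "nat \<Rightarrow> (nat \<Rightarrow> nat) \<Rightarrow> complex mat" where
  "perm_mat N \<tau> = mat N N (\<lambda>(i,j). if i = \<tau> j then 1 else 0)"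

text \<open>Diagonal element t_1^(a 0) ... t_N^(a (N-1)) of G_f^d.\<close>
definition diag_el :: "nat \<Rightarrow> (nat \<Rightarrow> nat) \<Rightarrow> complex mat" where
  "diag_el N a = mat N N (\<lambda>(i,j). if i = j then zeta N ^ a i else 0)"

definition Gd :: "nat \<Rightarrow> complex mat set" where
  "Gd N = {diag_el N a | a. True}"

definition SLf :: "nat \<Rightarrow> complex mat set" where
  "SLf N = {g \<in> Gd N. det g = 1}"

definition Ggrp :: "nat \<Rightarrow> (nat \<Rightarrow> nat) set \<Rightarrow> complex mat set" where
  "Ggrp N S = {perm_mat N \<tau> * g | \<tau> g. \<tau> \<in> S \<and> g \<in> SLf N}"

definition centralizer :: "complex mat set \<Rightarrow> complex mat \<Rightarrow> complex mat set" where
  "centralizer G u = {v \<in> G. v * u = u * v}"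

definition Fix :: "nat \<Rightarrow> complex mat \<Rightarrow> complex vec set" where
  "Fix N u = {x \<in> carrier_vec N. u *\<^sub>v x = x}"

definition vsum :: "nat \<Rightarrow> complex vec list \<Rightarrow> complex vec" where
  "vsum N ys = foldr (+) ys (0\<^sub>v N)"

definition lincomb :: "nat \<Rightarrow> (nat \<Rightarrow> complex) \<Rightarrow> complex vec list \<Rightarrow> complex vec" where
  "lincomb N c bs = vsum N (map (\<lambda>i. c i \<cdot>\<^sub>v bs ! i) [0..<length bs])"

definition Mspace :: "nat \<Rightarrow> complex mat \<Rightarrow> complex vec set" where
  "Mspace N u = {vsum N ys | ys. \<forall>y \<in> set ys. y \<in> carrier_vec N \<and>
       (\<exists>c. c \<noteq> 1 \<and> u *\<^sub>v y = c \<cdot>\<^sub>v y)}"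

text \<open>Determinant of the restriction of v to a v-invariant subspace W,
  computed in some basis bs of W (independent of the choice).\<close>
definition is_basis :: "nat \<Rightarrow> complex vec list \<Rightarrow> complex vec set \<Rightarrow> bool" where
  "is_basis N bs W \<longleftrightarrow> set bs \<subseteq> carrier_vec N \<and>
     (\<forall>c. lincomb N c bs = 0\<^sub>v N \<longrightarrow> (\<forall>i < length bs. c i = 0)) \<and>
     W = {lincomb N c bs | c. True}"

definition det_restr :: "nat \<Rightarrow> complex mat \<Rightarrow> complex vec set \<Rightarrow> complex" where
  "det_restr N v W = (SOME d. \<exists>bs A. is_basis N bs W \<and>
      A \<in> carrier_mat (length bs) (length bs) \<and>
      (\<forall>j < length bs. v *\<^sub>v (bs ! j) = lincomb N (\<lambda>i. A $$ (i, j)) bs) \<and>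
      d = det A)"

inductive_set polyfun :: "nat \<Rightarrow> (complex vec \<Rightarrow> complex) set" for N where
  const: "(\<lambda>x. c) \<in> polyfun N"
| coord: "i < N \<Longrightarrow> (\<lambda>x. x $ i) \<in> polyfun N"
| add: "p \<in> polyfun N \<Longrightarrow> q \<in> polyfun N \<Longrightarrow> (\<lambda>x. p x + q x) \<in> polyfun N"
| mult: "p \<in> polyfun N \<Longrightarrow> q \<in> polyfun N \<Longrightarrow> (\<lambda>x. p x * q x) \<in> polyfun N"

definition fermat :: "nat \<Rightarrow> complex vec \<Rightarrow> complex" where
  "fermat N x = (\<Sum>i<N. (x $ i) ^ N)"

definition dir_deriv :: "nat \<Rightarrow> (complex vec \<Rightarrow> complex) \<Rightarrow> complex vec \<Rightarrow> complex vec \<Rightarrow> complex" where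
  "dir_deriv N F w x = (THE D. ((\<lambda>t. F (x + t \<cdot>\<^sub>v w)) has_field_derivative D) (at 0))"

text \<open>Equality of classes in Jac(F|_V): the difference, as a polynomial function on the
  linear subspace V, lies in the ideal generated by the partial derivatives of F|_V
  (i.e. by the directional derivatives of F along vectors of V, restricted to V).\<close>
definition jac_eq :: "nat \<Rightarrow> (complex vec \<Rightarrow> complex) \<Rightarrow> complex vec set
     \<Rightarrow> (complex vec \<Rightarrow> complex) \<Rightarrow> (complex vec \<Rightarrow> complex) \<Rightarrow> bool" where
  "jac_eq N F V \<phi> \<psi> \<longleftrightarrow> (\<exists>ws hs. length ws = length hs \<and> set ws \<subseteq> V \<and> set hs \<subseteq> polyfun N \<and>
      (\<forall>x \<in> V. \<phi> x - \<psi> x = (\<Sum>i<length ws. (hs ! i) x * dir_deriv N F (ws ! i) x)))"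

definition cycle_supports :: "nat \<Rightarrow> (nat \<Rightarrow> nat) \<Rightarrow> nat set set" where
  "cycle_supports N \<sigma> = {{(\<sigma> ^^ k) i | k. True} | i. i < N}"

end

theory Submission
  imports Defs "HOL-Combinatorics.Orbits" "HOL-Combinatorics.Cycles"
begin

text \<open>Give each cycle \<open>I\<close> of \<open>\<sigma>\<close> a weight \<open>\<alpha> I\<close> with \<open>N dvd \<Sum>\<^sub>I \<alpha> I * |I|\<close>. The diagonal
  element \<open>v\<close> acting by \<open>\<zeta> ^ \<alpha> I\<close> on the coordinates in \<open>I\<close> then lies in \<open>SL\<^sub>f\<close> and
  commutes with \<open>\<sigma>\<close>. On \<open>Fix(\<sigma>)\<close>, with coordinates \<open>\<phi> I\<close>, the class \<open>X\<close> is a nonzero multiple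
  of the monomial \<open>\<Prod>\<^sub>I \<phi> I ^ r I\<close>, which \<open>v\<close> multiplies by \<open>\<zeta> ^ (\<Sum>\<^sub>I \<alpha> I * r I)\<close>, and the
  Jacobian ideal of \<open>f\<close> restricted to \<open>Fix(\<sigma>)\<close> is generated by the \<open>\<phi> I ^ (N - 1)\<close>. As
  \<open>r I < N - 1\<close>, the monomial lies outside this ideal, so invariance of \<open>X\<close> forces
  \<open>det (v|M\<^sub>\<sigma>) = \<zeta> ^ (\<Sum>\<^sub>I \<alpha> I * r I)\<close>. In the basis of \<open>M\<^sub>\<sigma>\<close> formed by the \<open>e\<^sub>k - e\<^sub>m\<close>,
  where \<open>k\<close> is not the least element \<open>m\<close> of its cycle, this determinant is
  \<open>\<zeta> ^ (\<Sum>\<^sub>I \<alpha> I * (|I| - 1))\<close>; hence \<open>N dvd \<Sum>\<^sub>I \<alpha> I * (r I + 1)\<close>. The weights \<open>|J|\<close> on \<open>I\<close>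
  and \<open>N - |I|\<close> on \<open>J\<close> give \<open>|J| (r I + 1) \<equiv> |I| (r J + 1) (mod N)\<close>, which for prime \<open>N\<close>
  says \<open>k\<^sub>I = k\<^sub>J\<close>.\<close>

section \<open>Roots of unity\<close>

lemma cis_power_eq_1_iff:
  assumes "n > 0"
  shows "cis (2 * pi / real n) ^ a = 1 \<longleftrightarrow> n dvd a"
proof
  assume "cis (2 * pi / real n) ^ a = 1"
  hence "cos (real a * (2 * pi / real n)) = 1" by (simp add: DeMoivre complex_eq_iff)
  then obtain m :: int where "real a * (2 * pi / real n) = real_of_int m * 2 * pi"
    by (auto simp: cos_one_2pi_int)
  hence "real a = real_of_int m * real n" using assms by (simp add: field_simps)
  hence "int a = m * int n" by (metis of_int_eq_iff of_int_mult of_int_of_nat_eq)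
  thus "n dvd a" by (metis dvd_triv_right int_dvd_int_iff)
next
  assume "n dvd a"
  then obtain k where "a = n * k" by auto
  hence "cis (2 * pi / real n) ^ a = (cis (2 * pi / real n) ^ n) ^ k" by (simp add: power_mult)
  also have "cis (2 * pi / real n) ^ n = 1" using assms by (simp add: DeMoivre)
  finally show "cis (2 * pi / real n) ^ a = 1" by simp
qed

lemma zeta_power_eq_imp_dvd:
  assumes n: "n > 0" and eq: "zeta n ^ e = zeta n ^ f"
  shows "int n dvd int e - int f"
proof -
  have "int n dvd int f - int e" if le: "e \<le> f" and eq: "zeta n ^ e = zeta n ^ f" for e f
  proof -
    have "zeta n ^ e * zeta n ^ (f - e) = zeta n ^ e * 1"
      using le eq by (metis le_add_diff_inverse power_add mult_1_right)
    hence "zeta n ^ (f - e) = 1" by (simp add: zeta_def)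
    hence "n dvd f - e" using cis_power_eq_1_iff[OF n] unfolding zeta_def by blast
    hence "int n dvd int (f - e)" by (simp only: int_dvd_int_iff)
    thus ?thesis using le by (simp only: of_nat_diff)
  qed
  thus ?thesis
    using eq dvd_diff_commute[of "int n" "int e" "int f"] by (cases "e \<le> f") auto
qed

lemma sum_roots_unity_power_eq_0:
  assumes n: "n > 0" and e: "\<not> n dvd e"
  shows "(\<Sum>z\<in>{z::complex. z ^ n = 1}. z ^ e) = 0"
proof -
  define q where "q = cis (2 * pi / real n) ^ e"
  have "(\<Sum>z\<in>{z::complex. z ^ n = 1}. z ^ e) = (\<Sum>k<n. cis (2 * pi * real k / real n) ^ e)"
    using n by (intro sum.reindex_bij_betw [symmetric] bij_betw_roots_unity) auto
  also have "\<dots> = (\<Sum>k<n. q ^ k)"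
  proof (intro sum.cong refl)
    fix k
    have "cis (2 * pi * real k / real n) = cis (2 * pi / real n) ^ k" by (simp add: DeMoivre mult_ac)
    thus "cis (2 * pi * real k / real n) ^ e = q ^ k" by (simp add: q_def flip: power_mult mult.commute)
  qed
  also have "q \<noteq> 1" using cis_power_eq_1_iff[OF n] e unfolding q_def by simp
  hence "(\<Sum>k<n. q ^ k) = (q ^ n - 1) / (q - 1)" by (rule geometric_sum)
  also have "q ^ n = (cis (2 * pi / real n) ^ n) ^ e" by (simp add: q_def flip: power_mult mult.commute)
  also have "cis (2 * pi / real n) ^ n = 1" using cis_power_eq_1_iff[OF n] by simp
  finally show ?thesis by simp
qed

lemma sum_roots_unity_mult_poly_eq_0:
  fixes q :: "complex poly"
  assumes n: "n > 0" and e: "e > 0" and deg: "e + degree q < n"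
  shows "(\<Sum>t\<in>{z::complex. z ^ n = 1}. t ^ e * poly q t) = 0"
proof -
  have "(\<Sum>t\<in>{z::complex. z ^ n = 1}. t ^ e * poly q t)
      = (\<Sum>t\<in>{z::complex. z ^ n = 1}. \<Sum>i\<le>degree q. coeff q i * t ^ (e + i))"
    by (simp add: poly_altdef sum_distrib_left power_add mult_ac)
  also have "\<dots> = (\<Sum>i\<le>degree q. coeff q i * (\<Sum>t\<in>{z::complex. z ^ n = 1}. t ^ (e + i)))"
    by (subst sum.swap) (simp add: sum_distrib_left)
  also have "\<dots> = 0"
  proof (intro sum.neutral ballI)
    fix i assume "i \<in> {..degree q}"
    hence "\<not> n dvd (e + i)" using e deg by (auto dest: dvd_imp_le)
    thus "coeff q i * (\<Sum>t\<in>{z::complex. z ^ n = 1}. t ^ (e + i)) = 0"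
      using sum_roots_unity_power_eq_0[OF n] by simp
  qed
  finally show ?thesis .
qed

section \<open>Monomials outside the ideal of \<open>M\<close>-th powers\<close>

lemma sum_PiE_split:
  assumes "a \<in> C"
  shows "(\<Sum>\<phi>\<in>Pi\<^sub>E C (\<lambda>_. U). F \<phi>) = (\<Sum>g\<in>Pi\<^sub>E (C - {a}) (\<lambda>_. U). \<Sum>t\<in>U. F (g(a := t)))"
proof -
  have PiE_eq: "Pi\<^sub>E C (\<lambda>_. U) = (\<lambda>(t, g). g(a := t)) ` (U \<times> Pi\<^sub>E (C - {a}) (\<lambda>_. U))"
    using PiE_insert_eq[of a "C - {a}" "\<lambda>_. U"] assms by (simp add: insert_absorb)
  have inj: "inj_on (\<lambda>(t, g). g(a := t)) (U \<times> Pi\<^sub>E (C - {a}) (\<lambda>_. U))"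
    using inj_combinator[of a "C - {a}" "\<lambda>_. U"] by simp
  have "(\<Sum>\<phi>\<in>Pi\<^sub>E C (\<lambda>_. U). F \<phi>) = (\<Sum>(t, g)\<in>U \<times> Pi\<^sub>E (C - {a}) (\<lambda>_. U). F (g(a := t)))"
    unfolding PiE_eq by (subst sum.reindex[OF inj]) (simp add: case_prod_beta)
  also have "\<dots> = (\<Sum>t\<in>U. \<Sum>g\<in>Pi\<^sub>E (C - {a}) (\<lambda>_. U). F (g(a := t)))"
    by (rule sum.cartesian_product[symmetric])
  also have "\<dots> = (\<Sum>g\<in>Pi\<^sub>E (C - {a}) (\<lambda>_. U). \<Sum>t\<in>U. F (g(a := t)))"
    by (rule sum.swap)
  finally show ?thesis .
qed

lemma sum_roots_unity_inverse_power_mult_poly_eq_0: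
  fixes q :: "complex poly"
  assumes r: "r < M" and n: "M + D < n" and q: "degree q \<le> D"
  shows "(\<Sum>t\<in>{z::complex. z ^ n = 1}. inverse t ^ r * (t ^ M * poly q t)) = 0"
proof -
  have "inverse t ^ r * (t ^ M * poly q t) = t ^ (M - r) * poly q t" if "t ^ n = 1" for t :: complex
  proof -
    have "t \<noteq> 0" using that n by (auto simp: power_0_left)
    hence "inverse t ^ r * t ^ r = 1" by (simp flip: power_mult_distrib)
    moreover have "t ^ M = t ^ (M - r) * t ^ r" using r by (simp flip: power_add add: less_imp_le)
    hence "inverse t ^ r * (t ^ M * poly q t) = (inverse t ^ r * t ^ r) * (t ^ (M - r) * poly q t)"
      by (simp only: mult_ac)
    ultimately show ?thesis by simp
  qed
  hence "(\<Sum>t\<in>{z::complex. z ^ n = 1}. inverse t ^ r * (t ^ M * poly q t))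
      = (\<Sum>t\<in>{z::complex. z ^ n = 1}. t ^ (M - r) * poly q t)"
    by (intro sum.cong) auto
  also have "\<dots> = 0" using r n q by (intro sum_roots_unity_mult_poly_eq_0) auto
  finally show ?thesis .
qed

lemma sum_roots_unity_PiE_power_term_eq_0:
  fixes C :: "'a set" and r :: "'a \<Rightarrow> nat" and h :: "('a \<Rightarrow> complex) \<Rightarrow> complex"
  assumes fin: "finite C" and I: "I \<in> C" and r: "r I < M" and n: "M + D < n"
    and h: "\<forall>\<phi>. \<exists>q. degree q \<le> D \<and> (\<forall>t. h (\<phi>(I := t)) = poly q t)"
  shows "(\<Sum>\<phi>\<in>Pi\<^sub>E C (\<lambda>_. {z. z ^ n = 1}). (\<Prod>J\<in>C. inverse (\<phi> J) ^ r J) * (\<phi> I ^ M * h \<phi>)) = 0"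
proof -
  have "(\<Sum>t\<in>{z. z ^ n = 1}. (\<Prod>J\<in>C. inverse ((g(I := t)) J) ^ r J) * (t ^ M * h (g(I := t)))) = 0"
    for g
  proof -
    obtain q where q: "degree q \<le> D" "\<forall>t. h (g(I := t)) = poly q t" using h by blast
    define W where "W = (\<Prod>J\<in>C - {I}. inverse (g J) ^ r J)"
    have "(\<Prod>J\<in>C. inverse ((g(I := t)) J) ^ r J) = inverse t ^ r I * W" for t
    proof -
      have "(\<Prod>J\<in>C - {I}. inverse ((g(I := t)) J) ^ r J) = W"
        unfolding W_def by (intro prod.cong) auto
      thus ?thesis unfolding prod.remove[OF fin I] by simp
    qed
    hence "(\<Sum>t\<in>{z. z ^ n = 1}. (\<Prod>J\<in>C. inverse ((g(I := t)) J) ^ r J) * (t ^ M * h (g(I := t))))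
        = W * (\<Sum>t\<in>{z::complex. z ^ n = 1}. inverse t ^ r I * (t ^ M * poly q t))"
      using q(2) by (simp add: sum_distrib_left mult_ac)
    also have "\<dots> = 0" using sum_roots_unity_inverse_power_mult_poly_eq_0[OF r n q(1)] by simp
    finally show ?thesis .
  qed
  thus ?thesis unfolding sum_PiE_split[OF I] by (simp only: fun_upd_same sum.neutral_const)
qed

text \<open>Averaging the identity against \<open>\<Prod>\<^sub>I \<phi> I ^ (- r I)\<close> over all \<open>\<phi>\<close> with values in the
  \<open>n\<close>-th roots of unity, \<open>n > M + D\<close>, kills every summand \<open>\<phi> I ^ M * H I \<phi>\<close> already in the
  variable \<open>\<phi> I\<close>, while the left-hand side averages to \<open>K\<close>.\<close>

lemma monomial_in_power_ideal_imp_coeff_0: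
  fixes C :: "'a set" and r :: "'a \<Rightarrow> nat" and H :: "'a \<Rightarrow> ('a \<Rightarrow> complex) \<Rightarrow> complex"
  assumes fin: "finite C" and r_less: "\<forall>I\<in>C. r I < M"
    and H_poly: "\<forall>I\<in>C. \<forall>\<phi>. \<exists>q. degree q \<le> D \<and> (\<forall>t. H I (\<phi>(I := t)) = poly q t)"
    and eq: "\<forall>\<phi>. K * (\<Prod>I\<in>C. \<phi> I ^ r I) = (\<Sum>I\<in>C. \<phi> I ^ M * H I \<phi>)"
  shows "K = 0"
proof -
  define n where "n = M + D + 1"
  define P where "P = Pi\<^sub>E C (\<lambda>_. {z::complex. z ^ n = 1})"
  define W where "W = (\<lambda>\<phi> :: 'a \<Rightarrow> complex. \<Prod>I\<in>C. inverse (\<phi> I) ^ r I)"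
  have n: "n > 0" by (simp add: n_def)
  have "card P = n ^ card C"
    using fin card_roots_unity_eq[OF n] by (simp add: P_def card_PiE)
  hence card_P: "card P \<noteq> 0" using n by simp
  have "W \<phi> * (\<Prod>I\<in>C. \<phi> I ^ r I) = 1" if "\<phi> \<in> P" for \<phi>
  proof -
    have "inverse (\<phi> I) ^ r I * \<phi> I ^ r I = 1" if "I \<in> C" for I
    proof -
      have "\<phi> I ^ n = 1" using that \<open>\<phi> \<in> P\<close> unfolding P_def by (blast dest: PiE_mem)
      hence "\<phi> I \<noteq> 0" using n by (auto simp: power_0_left)
      thus ?thesis by (simp flip: power_mult_distrib)
    qed
    thus ?thesis unfolding W_def prod.distrib[symmetric] by (intro prod.neutral) blast
  qed
  hence "K * of_nat (card P) = (\<Sum>\<phi>\<in>P. W \<phi> * (K * (\<Prod>I\<in>C. \<phi> I ^ r I)))"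
    by (simp add: mult.left_commute)
  also have "\<dots> = (\<Sum>I\<in>C. \<Sum>\<phi>\<in>P. W \<phi> * (\<phi> I ^ M * H I \<phi>))"
    using eq by (simp add: sum_distrib_left sum.swap[of _ P])
  also have "\<dots> = 0"
  proof (rule sum.neutral, rule ballI)
    fix I assume "I \<in> C"
    thus "(\<Sum>\<phi>\<in>P. W \<phi> * (\<phi> I ^ M * H I \<phi>)) = 0"
      using r_less H_poly unfolding P_def W_def n_def
      by (intro sum_roots_unity_PiE_power_term_eq_0[OF fin, where D = D]) auto
  qed
  finally show "K = 0" using card_P by simp
qed

section \<open>Functions that are polynomial along lines\<close>

definition poly_on_lines :: "nat \<Rightarrow> nat \<Rightarrow> (complex vec \<Rightarrow> complex) \<Rightarrow> bool" where
  "poly_on_lines N D F \<longleftrightarrow> (\<forall>x\<in>carrier_vec N. \<forall>w\<in>carrier_vec N.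
      \<exists>q. degree q \<le> D \<and> (\<forall>t. F (x + t \<cdot>\<^sub>v w) = poly q t))"

lemma poly_on_lines_mono: "poly_on_lines N D F \<Longrightarrow> D \<le> D' \<Longrightarrow> poly_on_lines N D' F"
  unfolding poly_on_lines_def by (meson order_trans)

lemma poly_on_lines_const: "poly_on_lines N 0 (\<lambda>x. c)"
  unfolding poly_on_lines_def by (intro ballI exI[of _ "[:c:]"]) simp

lemma poly_on_lines_coord:
  assumes "i < N"
  shows "poly_on_lines N 1 (\<lambda>x. x $ i)"
  unfolding poly_on_lines_def
proof (intro ballI)
  fix x w :: "complex vec" assume "x \<in> carrier_vec N" "w \<in> carrier_vec N"
  thus "\<exists>q. degree q \<le> 1 \<and> (\<forall>t. (x + t \<cdot>\<^sub>v w) $ i = poly q t)"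
    using assms by (intro exI[of _ "[:x $ i, w $ i:]"]) (auto simp: mult.commute)
qed

lemma poly_on_lines_add:
  assumes "poly_on_lines N D p" and "poly_on_lines N D q"
  shows "poly_on_lines N D (\<lambda>x. p x + q x)"
  unfolding poly_on_lines_def
proof (intro ballI)
  fix x w :: "complex vec" assume "x \<in> carrier_vec N" "w \<in> carrier_vec N"
  with assms obtain q1 q2 where "degree q1 \<le> D" "\<forall>t. p (x + t \<cdot>\<^sub>v w) = poly q1 t"
      and "degree q2 \<le> D" "\<forall>t. q (x + t \<cdot>\<^sub>v w) = poly q2 t"
    unfolding poly_on_lines_def by meson
  thus "\<exists>r. degree r \<le> D \<and> (\<forall>t. p (x + t \<cdot>\<^sub>v w) + q (x + t \<cdot>\<^sub>v w) = poly r t)"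
    by (intro exI[of _ "q1 + q2"]) (simp add: degree_add_le)
qed

lemma poly_on_lines_mult:
  assumes "poly_on_lines N D1 p" and "poly_on_lines N D2 q"
  shows "poly_on_lines N (D1 + D2) (\<lambda>x. p x * q x)"
  unfolding poly_on_lines_def
proof (intro ballI)
  fix x w :: "complex vec" assume "x \<in> carrier_vec N" "w \<in> carrier_vec N"
  with assms obtain q1 q2 where "degree q1 \<le> D1" "\<forall>t. p (x + t \<cdot>\<^sub>v w) = poly q1 t"
      and "degree q2 \<le> D2" "\<forall>t. q (x + t \<cdot>\<^sub>v w) = poly q2 t"
    unfolding poly_on_lines_def by meson
  thus "\<exists>r. degree r \<le> D1 + D2 \<and> (\<forall>t. p (x + t \<cdot>\<^sub>v w) * q (x + t \<cdot>\<^sub>v w) = poly r t)"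
    by (intro exI[of _ "q1 * q2"]) (auto intro: order_trans[OF degree_mult_le])
qed

lemma poly_on_lines_sum:
  assumes "finite A" and "\<forall>i\<in>A. poly_on_lines N D (f i)"
  shows "poly_on_lines N D (\<lambda>x. \<Sum>i\<in>A. f i x)"
  using assms
proof (induction A rule: finite_induct)
  case empty
  show ?case using poly_on_lines_mono[OF poly_on_lines_const] by simp
next
  case (insert i A)
  thus ?case by (simp add: poly_on_lines_add)
qed

lemma polyfun_imp_poly_on_lines: "p \<in> polyfun N \<Longrightarrow> \<exists>D. poly_on_lines N D p"
proof (induction rule: polyfun.induct)
  case (add p q)
  then obtain D1 D2 where "poly_on_lines N D1 p" "poly_on_lines N D2 q" by blast
  hence "poly_on_lines N (max D1 D2) p" "poly_on_lines N (max D1 D2) q"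
    by (auto elim: poly_on_lines_mono)
  thus ?case by (blast intro: poly_on_lines_add)
qed (blast intro: poly_on_lines_const poly_on_lines_coord poly_on_lines_mult)+

lemma polyfuns_poly_on_lines:
  assumes "finite A" and "A \<subseteq> polyfun N"
  shows "\<exists>D. \<forall>h\<in>A. poly_on_lines N D h"
  using assms
proof (induction A rule: finite_induct)
  case (insert h A)
  then obtain D1 D2 where "\<forall>h\<in>A. poly_on_lines N D1 h" "poly_on_lines N D2 h"
    using polyfun_imp_poly_on_lines by blast
  hence "\<forall>h'\<in>insert h A. poly_on_lines N (D1 + D2) h'"
    by (auto intro: poly_on_lines_mono[where D' = "D1 + D2"])
  thus ?case by blast
qed simp

lemma dir_deriv_fermat:
  assumes x: "x \<in> carrier_vec N" and w: "w \<in> carrier_vec N"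
  shows "dir_deriv N (fermat N) w x = (\<Sum>i<N. of_nat N * (x $ i) ^ (N - 1) * w $ i)"
proof -
  have line: "(\<lambda>t. fermat N (x + t \<cdot>\<^sub>v w)) = (\<lambda>t. \<Sum>i<N. (x $ i + t * w $ i) ^ N)"
    using x w by (auto simp: fermat_def intro!: sum.cong)
  have "((\<lambda>t. \<Sum>i<N. (x $ i + t * w $ i) ^ N) has_field_derivative
          (\<Sum>i<N. of_nat N * (x $ i + 0 * w $ i) ^ (N - 1) * w $ i)) (at 0)"
    by (auto intro!: derivative_eq_intros sum.cong)
  hence "((\<lambda>t. fermat N (x + t \<cdot>\<^sub>v w)) has_field_derivative
          (\<Sum>i<N. of_nat N * (x $ i) ^ (N - 1) * w $ i)) (at 0)"
    unfolding line by simp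
  thus ?thesis unfolding dir_deriv_def using DERIV_unique by blast
qed

section \<open>Linear combinations and determinants of restrictions\<close>

lemma vsum_Nil [simp]: "vsum N [] = 0\<^sub>v N"
  and vsum_Cons [simp]: "vsum N (y # ys) = y + vsum N ys"
  by (simp_all add: vsum_def)

lemma vsum_carrier: "set ys \<subseteq> carrier_vec N \<Longrightarrow> vsum N ys \<in> carrier_vec N"
  by (induction ys) auto

lemma index_vsum: "set ys \<subseteq> carrier_vec N \<Longrightarrow> l < N \<Longrightarrow> vsum N ys $ l = (\<Sum>y\<leftarrow>ys. y $ l)"
  by (induction ys) (auto simp: vsum_carrier[THEN carrier_vecD])

lemma vsum_append:
  "set xs \<subseteq> carrier_vec N \<Longrightarrow> set ys \<subseteq> carrier_vec N \<Longrightarrow> vsum N (xs @ ys) = vsum N xs + vsum N ys"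
  by (induction xs) (auto simp: vsum_carrier)

lemma vsum_map_smult:
  "set xs \<subseteq> carrier_vec N \<Longrightarrow> vsum N (map (\<lambda>y. a \<cdot>\<^sub>v y) xs) = a \<cdot>\<^sub>v vsum N xs"
  by (induction xs) (auto simp: vsum_carrier smult_add_distrib_vec)

lemma lincomb_carrier: "set bs \<subseteq> carrier_vec N \<Longrightarrow> lincomb N c bs \<in> carrier_vec N"
  unfolding lincomb_def by (rule vsum_carrier) (auto simp: nth_mem subsetD)

lemma index_lincomb:
  assumes bs: "set bs \<subseteq> carrier_vec N" and l: "l < N"
  shows "lincomb N c bs $ l = (\<Sum>i<length bs. c i * bs ! i $ l)"
proof -
  have dim: "dim_vec (bs ! i) = N" if "i < length bs" for i
    using bs that nth_mem by fastforce
  have "lincomb N c bs $ l = (\<Sum>i\<leftarrow>[0..<length bs]. (c i \<cdot>\<^sub>v bs ! i) $ l)"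
    unfolding lincomb_def using bs l by (subst index_vsum) (auto simp: o_def nth_mem subsetD)
  also have "\<dots> = (\<Sum>i<length bs. (c i \<cdot>\<^sub>v bs ! i) $ l)"
    by (simp add: sum_set_upt_conv_sum_list_nat[symmetric] atLeast0LessThan)
  also have "\<dots> = (\<Sum>i<length bs. c i * bs ! i $ l)"
    using dim l by (intro sum.cong) auto
  finally show ?thesis .
qed

lemma lincomb_eq_mat_of_cols_mult:
  assumes bs: "set bs \<subseteq> carrier_vec N"
  shows "lincomb N c bs = mat_of_cols N bs *\<^sub>v vec (length bs) c"
proof (rule eq_vecI)
  show "dim_vec (lincomb N c bs) = dim_vec (mat_of_cols N bs *\<^sub>v vec (length bs) c)"
    using lincomb_carrier[OF bs] by simp
  fix l assume "l < dim_vec (mat_of_cols N bs *\<^sub>v vec (length bs) c)"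
  hence l: "l < N" by simp
  thus "lincomb N c bs $ l = (mat_of_cols N bs *\<^sub>v vec (length bs) c) $ l"
    using index_lincomb[OF bs l]
    by (simp add: scalar_prod_def mat_of_cols_index atLeast0LessThan row_def mult.commute)
qed

lemma lincomb_single:
  assumes "set bs \<subseteq> carrier_vec N" and "j < length bs"
    and "\<forall>i<length bs. c i = (if i = j then a else 0)"
  shows "lincomb N c bs = a \<cdot>\<^sub>v bs ! j"
proof (rule eq_vecI)
  have bj: "bs ! j \<in> carrier_vec N" using assms nth_mem by blast
  thus "dim_vec (lincomb N c bs) = dim_vec (a \<cdot>\<^sub>v bs ! j)"
    using lincomb_carrier[OF assms(1)] by simp
  fix l assume "l < dim_vec (a \<cdot>\<^sub>v bs ! j)"
  hence l: "l < N" using bj by simp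
  have "(\<Sum>i<length bs. c i * bs ! i $ l) = (\<Sum>i<length bs. if i = j then a * bs ! j $ l else 0)"
    using assms(3) by (intro sum.cong) auto
  thus "lincomb N c bs $ l = (a \<cdot>\<^sub>v bs ! j) $ l"
    using assms l bj by (simp add: index_lincomb)
qed

lemma mat_mult_left_cancel:
  fixes B :: "'a::comm_ring_1 mat"
  assumes B: "B \<in> carrier_mat N L"
    and ker: "\<forall>u\<in>carrier_vec L. B *\<^sub>v u = 0\<^sub>v N \<longrightarrow> u = 0\<^sub>v L"
    and X: "X \<in> carrier_mat L n" and Y: "Y \<in> carrier_mat L n"
    and eq: "B * X = B * Y"
  shows "X = Y"
proof (rule mat_col_eqI)
  fix j assume "j < dim_col Y"
  hence j: "j < n" using Y by simp
  have cX: "col X j \<in> carrier_vec L" and cY: "col Y j \<in> carrier_vec L" using X Y j by auto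
  have "B *\<^sub>v (col X j - col Y j) = B *\<^sub>v col X j - B *\<^sub>v col Y j"
    by (rule mult_minus_distrib_mat_vec[OF B cX cY])
  also have "B *\<^sub>v col X j = B *\<^sub>v col Y j"
    using eq col_mult2[OF B X j] col_mult2[OF B Y j] by metis
  finally have "B *\<^sub>v (col X j - col Y j) = 0\<^sub>v N" using B cY by simp
  hence z: "col X j - col Y j = 0\<^sub>v L" using ker cX cY by simp
  show "col X j = col Y j"
  proof (rule eq_vecI)
    fix i assume "i < dim_vec (col Y j)"
    hence "i < L" using Y by simp
    thus "col X j $ i = col Y j $ i"
      using arg_cong[OF z, of "\<lambda>v. v $ i"] cX cY Y index_minus_vec(1)[of i "col Y j" "col X j"]
      by simp
  qed (use X Y in simp)
qed (use X Y in simp_all)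

lemma dim_le_if_mult_eq_one:
  fixes P Q :: "'a::field mat"
  assumes P: "P \<in> carrier_mat n m" and Q: "Q \<in> carrier_mat m n" and PQ: "P * Q = 1\<^sub>m n"
  shows "n \<le> m"
proof (rule ccontr)
  assume "\<not> n \<le> m"
  hence mn: "m < n" by simp
  \<comment> \<open>Pad \<open>P\<close> and \<open>Q\<close> with zeros to square matrices; then \<open>Q' * P'\<close> would be the identity
    although its last row vanishes.\<close>
  define P' where "P' = mat n n (\<lambda>(i,j). if j < m then P $$ (i,j) else 0)"
  define Q' where "Q' = mat n n (\<lambda>(i,j). if i < m then Q $$ (i,j) else 0)"
  have P': "P' \<in> carrier_mat n n" and Q': "Q' \<in> carrier_mat n n" unfolding P'_def Q'_def by auto
  have "P' * Q' = 1\<^sub>m n"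
  proof (rule eq_matI)
    fix i j assume ij: "i < dim_row (1\<^sub>m n)" "j < dim_col (1\<^sub>m n)"
    have "(P' * Q') $$ (i,j) = (\<Sum>k<n. P' $$ (i,k) * Q' $$ (k,j))"
      using ij P' Q' by (simp add: scalar_prod_def atLeast0LessThan row_def col_def)
    also have "\<dots> = (\<Sum>k<m. P' $$ (i,k) * Q' $$ (k,j))"
      using mn ij by (intro sum.mono_neutral_right) (auto simp: P'_def Q'_def)
    also have "\<dots> = (\<Sum>k<m. P $$ (i,k) * Q $$ (k,j))"
      using mn ij by (intro sum.cong) (auto simp: P'_def Q'_def)
    also have "\<dots> = (P * Q) $$ (i,j)"
      using ij P Q by (simp add: scalar_prod_def atLeast0LessThan row_def col_def)
    finally show "(P' * Q') $$ (i,j) = 1\<^sub>m n $$ (i,j)" using PQ by simp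
  qed (use P' Q' in auto)
  hence "Q' * P' = 1\<^sub>m n" using mat_mult_left_right_inverse[OF P' Q'] by simp
  hence "(Q' * P') $$ (n - 1, n - 1) = 1" using mn by simp
  moreover have "(Q' * P') $$ (n - 1, n - 1) = (\<Sum>k<n. Q' $$ (n - 1,k) * P' $$ (k,n - 1))"
    using mn P' Q' by (simp add: scalar_prod_def atLeast0LessThan row_def col_def)
  moreover have "\<dots> = 0" using mn by (intro sum.neutral) (auto simp: Q'_def)
  ultimately show False by simp
qed

lemma is_basis_carrier: "is_basis N bs W \<Longrightarrow> set bs \<subseteq> carrier_vec N"
  unfolding is_basis_def by blast

lemma is_basis_kernel:
  assumes b: "is_basis N bs W"
  shows "\<forall>u\<in>carrier_vec (length bs). mat_of_cols N bs *\<^sub>v u = 0\<^sub>v N \<longrightarrow> u = 0\<^sub>v (length bs)"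
proof (intro ballI impI)
  fix u :: "complex vec" assume u: "u \<in> carrier_vec (length bs)" and z: "mat_of_cols N bs *\<^sub>v u = 0\<^sub>v N"
  have "vec (length bs) (\<lambda>i. u $ i) = u" using u by auto
  hence "lincomb N (\<lambda>i. u $ i) bs = 0\<^sub>v N"
    using z lincomb_eq_mat_of_cols_mult[OF is_basis_carrier[OF b]] by metis
  hence "\<forall>i<length bs. u $ i = 0" using b unfolding is_basis_def by blast
  thus "u = 0\<^sub>v (length bs)" using u by auto
qed

lemma is_basis_range:
  assumes b: "is_basis N bs W"
  shows "W = {mat_of_cols N bs *\<^sub>v u | u. u \<in> carrier_vec (length bs)}"
proof -
  have "W = {lincomb N c bs | c. True}" using b unfolding is_basis_def by blast
  also have "\<dots> = {mat_of_cols N bs *\<^sub>v u | u. u \<in> carrier_vec (length bs)}"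
    unfolding lincomb_eq_mat_of_cols_mult[OF is_basis_carrier[OF b]]
  proof safe
    fix u :: "complex vec" assume "u \<in> carrier_vec (length bs)"
    hence "u = vec (length bs) (\<lambda>i. u $ i)" by auto
    thus "\<exists>c. mat_of_cols N bs *\<^sub>v u = mat_of_cols N bs *\<^sub>v vec (length bs) c \<and> True" by metis
  qed auto
  finally show ?thesis .
qed

lemma is_basis_nth_mem:
  assumes b: "is_basis N bs W" and j: "j < length bs"
  shows "bs ! j \<in> W"
proof -
  have "bs ! j = lincomb N (\<lambda>i. if i = j then 1 else 0) bs"
    using lincomb_single[OF is_basis_carrier[OF b] j] is_basis_carrier[OF b] j nth_mem by fastforce
  thus ?thesis using b unfolding is_basis_def by blast
qed

lemma is_basis_change:
  assumes b: "is_basis N bs W" and b0: "is_basis N bs0 W"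
  obtains P where "P \<in> carrier_mat (length bs0) (length bs)"
    and "mat_of_cols N bs = mat_of_cols N bs0 * P"
proof -
  have "\<forall>j<length bs. \<exists>u. u \<in> carrier_vec (length bs0) \<and> bs ! j = mat_of_cols N bs0 *\<^sub>v u"
    using is_basis_nth_mem[OF b] is_basis_range[OF b0] by blast
  then obtain p where p: "\<forall>j<length bs. p j \<in> carrier_vec (length bs0) \<and> bs ! j = mat_of_cols N bs0 *\<^sub>v p j"
    by metis
  define P where "P = mat (length bs0) (length bs) (\<lambda>(i,j). p j $ i)"
  have P: "P \<in> carrier_mat (length bs0) (length bs)" unfolding P_def by simp
  have "mat_of_cols N bs = mat_of_cols N bs0 * P"
  proof (rule mat_col_eqI)
    fix j assume "j < dim_col (mat_of_cols N bs0 * P)"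
    hence j: "j < length bs" using P by simp
    have "col P j = p j" unfolding P_def using j p by (intro eq_vecI) auto
    hence "col (mat_of_cols N bs0 * P) j = bs ! j"
      using col_mult2[OF _ P j, of "mat_of_cols N bs0" N] p j by simp
    thus "col (mat_of_cols N bs) j = col (mat_of_cols N bs0 * P) j"
      using j is_basis_carrier[OF b] nth_mem by (metis col_mat_of_cols subsetD)
  qed (use P in simp_all)
  thus ?thesis using P that by blast
qed

lemma is_basis_change_invertible:
  assumes b: "is_basis N bs W" and b0: "is_basis N bs0 W"
  obtains P Q where "length bs0 = length bs"
    and "P \<in> carrier_mat (length bs) (length bs)" and "Q \<in> carrier_mat (length bs) (length bs)"
    and "mat_of_cols N bs = mat_of_cols N bs0 * P" and "mat_of_cols N bs0 = mat_of_cols N bs * Q"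
    and "Q * P = 1\<^sub>m (length bs)"
proof -
  define B where "B = mat_of_cols N bs"
  define B0 where "B0 = mat_of_cols N bs0"
  have B: "B \<in> carrier_mat N (length bs)" and B0: "B0 \<in> carrier_mat N (length bs0)"
    unfolding B_def B0_def by auto
  obtain P where P: "P \<in> carrier_mat (length bs0) (length bs)" and BP: "B = B0 * P"
    using is_basis_change[OF b b0] unfolding B_def B0_def by blast
  obtain Q where Q: "Q \<in> carrier_mat (length bs) (length bs0)" and BQ: "B0 = B * Q"
    using is_basis_change[OF b0 b] unfolding B_def B0_def by blast
  have ker: "\<forall>u\<in>carrier_vec (length bs). B *\<^sub>v u = 0\<^sub>v N \<longrightarrow> u = 0\<^sub>v (length bs)"
    unfolding B_def by (rule is_basis_kernel[OF b])
  have ker0: "\<forall>u\<in>carrier_vec (length bs0). B0 *\<^sub>v u = 0\<^sub>v N \<longrightarrow> u = 0\<^sub>v (length bs0)"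
    unfolding B0_def by (rule is_basis_kernel[OF b0])
  have "B0 * (P * Q) = (B0 * P) * Q" using B0 P Q by (simp add: assoc_mult_mat)
  also have "\<dots> = B0 * 1\<^sub>m (length bs0)" using B0 by (simp add: BP[symmetric] BQ[symmetric])
  finally have "B0 * (P * Q) = B0 * 1\<^sub>m (length bs0)" .
  hence PQ: "P * Q = 1\<^sub>m (length bs0)"
    using mat_mult_left_cancel[OF B0 ker0] P Q by (meson mult_carrier_mat one_carrier_mat)
  have "B * (Q * P) = (B * Q) * P" using B P Q by (simp add: assoc_mult_mat)
  also have "\<dots> = B * 1\<^sub>m (length bs)" using B by (simp add: BP[symmetric] BQ[symmetric])
  finally have "B * (Q * P) = B * 1\<^sub>m (length bs)" .
  hence QP: "Q * P = 1\<^sub>m (length bs)"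
    using mat_mult_left_cancel[OF B ker] P Q by (meson mult_carrier_mat one_carrier_mat)
  have L: "length bs0 = length bs"
    using dim_le_if_mult_eq_one[OF P Q PQ] dim_le_if_mult_eq_one[OF Q P QP] by simp
  from that[OF L _ _ BP[unfolded B_def B0_def] BQ[unfolded B_def B0_def] QP] P Q L
  show ?thesis by simp
qed

lemma repr_mat_mult:
  assumes b: "is_basis N bs W" and v: "v \<in> carrier_mat N N"
    and A: "A \<in> carrier_mat (length bs) (length bs)"
    and Ah: "\<forall>j<length bs. v *\<^sub>v bs ! j = lincomb N (\<lambda>i. A $$ (i, j)) bs"
  shows "v * mat_of_cols N bs = mat_of_cols N bs * A"
proof (rule mat_col_eqI)
  have bs: "set bs \<subseteq> carrier_vec N" by (rule is_basis_carrier[OF b])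
  have Bc: "mat_of_cols N bs \<in> carrier_mat N (length bs)" by simp
  fix j assume "j < dim_col (mat_of_cols N bs * A)"
  hence j: "j < length bs" using A by simp
  have "col (v * mat_of_cols N bs) j = v *\<^sub>v bs ! j"
    using col_mult2[OF v Bc j] j bs nth_mem by (metis col_mat_of_cols subsetD)
  also have "\<dots> = mat_of_cols N bs *\<^sub>v col A j"
    using Ah j A lincomb_eq_mat_of_cols_mult[OF bs] by (simp add: col_def)
  also have "\<dots> = col (mat_of_cols N bs * A) j" by (rule col_mult2[OF Bc A j, symmetric])
  finally show "col (v * mat_of_cols N bs) j = col (mat_of_cols N bs * A) j" .
qed (use A v in simp_all)

lemma det_repr_mat_eq:
  assumes b: "is_basis N bs W" and b0: "is_basis N bs0 W" and v: "v \<in> carrier_mat N N"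
    and A: "A \<in> carrier_mat (length bs) (length bs)"
    and Ah: "\<forall>j<length bs. v *\<^sub>v bs ! j = lincomb N (\<lambda>i. A $$ (i, j)) bs"
    and A0: "A0 \<in> carrier_mat (length bs0) (length bs0)"
    and A0h: "\<forall>j<length bs0. v *\<^sub>v bs0 ! j = lincomb N (\<lambda>i. A0 $$ (i, j)) bs0"
  shows "det A = det A0"
proof -
  define B where "B = mat_of_cols N bs"
  obtain P Q where L: "length bs0 = length bs"
    and P: "P \<in> carrier_mat (length bs) (length bs)" and Q: "Q \<in> carrier_mat (length bs) (length bs)"
    and BP: "B = mat_of_cols N bs0 * P" and BQ: "mat_of_cols N bs0 = B * Q"
    and QP: "Q * P = 1\<^sub>m (length bs)"
    using is_basis_change_invertible[OF b b0] unfolding B_def by blast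
  have B: "B \<in> carrier_mat N (length bs)" unfolding B_def by simp
  have ker: "\<forall>u\<in>carrier_vec (length bs). B *\<^sub>v u = 0\<^sub>v N \<longrightarrow> u = 0\<^sub>v (length bs)"
    unfolding B_def by (rule is_basis_kernel[OF b])
  have A0': "A0 \<in> carrier_mat (length bs) (length bs)" using A0 L by simp
  have "B * A = v * B" using repr_mat_mult[OF b v A Ah] unfolding B_def by simp
  also have "\<dots> = (v * mat_of_cols N bs0) * P"
    unfolding BP using v P L by (subst assoc_mult_mat) auto
  also have "\<dots> = (B * Q * A0) * P" using repr_mat_mult[OF b0 v A0 A0h] BQ by simp
  also have "\<dots> = B * (Q * A0 * P)"
    using assoc_mult_mat[OF B Q A0'] assoc_mult_mat[OF B mult_carrier_mat[OF Q A0'] P] by simp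
  finally have "A = Q * A0 * P"
    using mat_mult_left_cancel[OF B ker A] Q A0' P
    by (meson mult_carrier_mat)
  hence "det A = det Q * det A0 * det P" using Q A0' P by (simp add: det_mult)
  also have "\<dots> = det A0 * det (Q * P)" using Q P by (simp add: det_mult)
  finally show ?thesis using QP by simp
qed

lemma det_restr_eqI:
  assumes b: "is_basis N bs W" and v: "v \<in> carrier_mat N N"
    and A: "A \<in> carrier_mat (length bs) (length bs)"
    and Ah: "\<forall>j<length bs. v *\<^sub>v bs ! j = lincomb N (\<lambda>i. A $$ (i, j)) bs"
  shows "det_restr N v W = det A"
proof -
  let ?P = "\<lambda>d. \<exists>bs A. is_basis N bs W \<and> A \<in> carrier_mat (length bs) (length bs) \<and>
      (\<forall>j < length bs. v *\<^sub>v (bs ! j) = lincomb N (\<lambda>i. A $$ (i, j)) bs) \<and> d = det A"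
  have "?P (det A)" using b A Ah by blast
  hence "?P (det_restr N v W)" unfolding det_restr_def by (rule someI)
  thus ?thesis using det_repr_mat_eq[OF _ b v _ _ A Ah] by metis
qed

section \<open>The cycles of a permutation of \<open>{..<N}\<close>\<close>

lemma sum_lessThan_shift_periodic:
  fixes g :: "nat \<Rightarrow> 'a::cancel_comm_monoid_add"
  assumes "g m = g 0"
  shows "(\<Sum>t<m. g (Suc t)) = (\<Sum>t<m. g t)"
proof -
  have "g 0 + (\<Sum>t<m. g (Suc t)) = (\<Sum>t<m. g t) + g m"
    by (simp flip: sum.lessThan_Suc_shift)
  thus ?thesis using assms by (simp add: add.commute)
qed

locale perm_range =
  fixes N :: nat and \<sigma> :: "nat \<Rightarrow> nat"
  assumes permutes: "\<sigma> permutes {..<N}"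
begin

abbreviation "P\<sigma> \<equiv> perm_mat N \<sigma>"
abbreviation "M\<sigma> \<equiv> Mspace N P\<sigma>"
abbreviation "C\<sigma> \<equiv> cycle_supports N \<sigma>"
abbreviation "inv\<sigma> \<equiv> Hilbert_Choice.inv \<sigma>"

lemma permutation: "permutation \<sigma>"
  using permutes by (auto simp: permutation_permutes)

lemma orbit_eq_funpow_image: "orbit \<sigma> i = {(\<sigma> ^^ n) i | n. True}"
  by (rule orbit_altdef_permutation[OF permutation])

lemma self_in_orbit: "i \<in> orbit \<sigma> i"
  by (rule permutation_self_in_orbit[OF permutation])

lemma finite_orbit_perm: "finite (orbit \<sigma> i)"
  by (rule finite_orbit[OF self_in_orbit])

lemma orbit_subset_range: "i < N \<Longrightarrow> orbit \<sigma> i \<subseteq> {..<N}"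
  using permutes_in_funpow_image[OF permutes] by (auto simp: orbit_eq_funpow_image)

lemma orbit_eq_if_mem: "j \<in> orbit \<sigma> i \<Longrightarrow> orbit \<sigma> j = orbit \<sigma> i"
  using orbit_cyclic_eq3[OF cyclic_on_orbit[OF permutes]] by simp

lemma mem_orbit_iff: "k \<in> orbit \<sigma> i \<longleftrightarrow> orbit \<sigma> k = orbit \<sigma> i"
  using orbit_eq_if_mem self_in_orbit by metis

lemma orbit_apply_eq: "orbit \<sigma> (\<sigma> j) = orbit \<sigma> j"
  by (rule permutation_orbit_step[OF permutation])

lemma orbit_inv_apply_eq: "orbit \<sigma> (inv\<sigma> j) = orbit \<sigma> j"
  using orbit_apply_eq[of "inv\<sigma> j"] permutes_inverses(1)[OF permutes] by simp

lemma image_orbit_eq: "\<sigma> ` orbit \<sigma> i = orbit \<sigma> i"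
proof (rule endo_inj_surj)
  show "\<sigma> ` orbit \<sigma> i \<subseteq> orbit \<sigma> i" by (auto intro: orbit.step)
  show "inj_on \<sigma> (orbit \<sigma> i)" using permutes_inj[OF permutes] by (rule inj_on_subset) simp
qed (rule finite_orbit_perm)

lemma inv_less: "l < N \<Longrightarrow> inv\<sigma> l < N"
  using permutes_in_image[OF permutes_inv[OF permutes], of l] by simp

lemma cycle_supports_eq: "C\<sigma> = orbit \<sigma> ` {..<N}"
  unfolding cycle_supports_def orbit_eq_funpow_image by auto

lemma finite_cycle_supports: "finite C\<sigma>"
  unfolding cycle_supports_eq by simp

lemma cycle_supportsE:
  assumes "I \<in> C\<sigma>"
  obtains i where "i < N" and "I = orbit \<sigma> i"
  using assms unfolding cycle_supports_eq by blast

lemma mem_cycle_support_iff: "I \<in> C\<sigma> \<Longrightarrow> k \<in> I \<longleftrightarrow> k < N \<and> orbit \<sigma> k = I"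
  by (metis cycle_supportsE mem_orbit_iff orbit_subset_range lessThan_iff subsetD)

lemma card_cycle_support_pos: "I \<in> C\<sigma> \<Longrightarrow> 0 < card I"
  by (metis cycle_supportsE card_gt_0_iff empty_iff finite_orbit_perm self_in_orbit)

lemma sum_over_cycle_supports: "(\<Sum>k<N. F k) = (\<Sum>I\<in>C\<sigma>. \<Sum>k\<in>I. F k)"
proof -
  have "(\<Sum>k<N. F k) = (\<Sum>I\<in>orbit \<sigma> ` {..<N}. \<Sum>k\<in>{x \<in> {..<N}. orbit \<sigma> x = I}. F k)"
    by (rule sum.image_gen) simp
  also have "\<dots> = (\<Sum>I\<in>C\<sigma>. \<Sum>k\<in>I. F k)"
    unfolding cycle_supports_eq[symmetric]
    by (intro sum.cong refl) (use mem_cycle_support_iff in blast)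
  finally show ?thesis .
qed

lemma perm_mat_carrier: "P\<sigma> \<in> carrier_mat N N"
  by (simp add: perm_mat_def)

lemma index_perm_mat_mult_vec:
  assumes "y \<in> carrier_vec N" and "l < N"
  shows "(P\<sigma> *\<^sub>v y) $ l = y $ inv\<sigma> l"
proof -
  have "(P\<sigma> *\<^sub>v y) $ l = (\<Sum>j<N. (if l = \<sigma> j then 1 else 0) * y $ j)"
    using assms by (simp add: perm_mat_def scalar_prod_def row_def atLeast0LessThan)
  also have "\<dots> = (\<Sum>j<N. if j = inv\<sigma> l then y $ j else 0)"
  proof (intro sum.cong refl)
    fix j
    have "l = \<sigma> j \<longleftrightarrow> j = inv\<sigma> l" using permutes_inv_eq[OF permutes] by metis
    thus "(if l = \<sigma> j then 1 else 0) * y $ j = (if j = inv\<sigma> l then y $ j else 0)" by simp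
  qed
  also have "\<dots> = y $ inv\<sigma> l" using inv_less[OF assms(2)] by simp
  finally show ?thesis .
qed

section \<open>The space \<open>M\<^sub>\<sigma>\<close>\<close>

lemma Mspace_carrier: "x \<in> M\<sigma> \<Longrightarrow> x \<in> carrier_vec N"
  unfolding Mspace_def by (auto intro: vsum_carrier)

lemma zero_in_Mspace: "0\<^sub>v N \<in> M\<sigma>"
  unfolding Mspace_def by (intro CollectI exI[of _ "[]"]) simp

lemma eigenvector_in_Mspace:
  assumes "y \<in> carrier_vec N" and "P\<sigma> *\<^sub>v y = c \<cdot>\<^sub>v y" and "c \<noteq> 1"
  shows "y \<in> M\<sigma>"
  unfolding Mspace_def using assms by (intro CollectI exI[of _ "[y]"]) auto

lemma Mspace_add:
  assumes "x \<in> M\<sigma>" and "y \<in> M\<sigma>"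
  shows "x + y \<in> M\<sigma>"
proof -
  obtain xs ys where x: "x = vsum N xs" "\<forall>z\<in>set xs. z \<in> carrier_vec N \<and> (\<exists>c. c \<noteq> 1 \<and> P\<sigma> *\<^sub>v z = c \<cdot>\<^sub>v z)"
    and y: "y = vsum N ys" "\<forall>z\<in>set ys. z \<in> carrier_vec N \<and> (\<exists>c. c \<noteq> 1 \<and> P\<sigma> *\<^sub>v z = c \<cdot>\<^sub>v z)"
    using assms unfolding Mspace_def by blast
  have "x + y = vsum N (xs @ ys)" using x y by (subst vsum_append) auto
  moreover have "\<forall>z\<in>set (xs @ ys). z \<in> carrier_vec N \<and> (\<exists>c. c \<noteq> 1 \<and> P\<sigma> *\<^sub>v z = c \<cdot>\<^sub>v z)"
    using x(2) y(2) by auto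
  ultimately show ?thesis unfolding Mspace_def by blast
qed

lemma Mspace_smult:
  assumes "x \<in> M\<sigma>"
  shows "a \<cdot>\<^sub>v x \<in> M\<sigma>"
proof -
  obtain xs where x: "x = vsum N xs" "\<forall>z\<in>set xs. z \<in> carrier_vec N \<and> (\<exists>c. c \<noteq> 1 \<and> P\<sigma> *\<^sub>v z = c \<cdot>\<^sub>v z)"
    using assms unfolding Mspace_def by blast
  have "a \<cdot>\<^sub>v x = vsum N (map (\<lambda>z. a \<cdot>\<^sub>v z) xs)" using x by (subst vsum_map_smult) auto
  moreover have "P\<sigma> *\<^sub>v (a \<cdot>\<^sub>v z) = c \<cdot>\<^sub>v (a \<cdot>\<^sub>v z)" if "z \<in> carrier_vec N" "P\<sigma> *\<^sub>v z = c \<cdot>\<^sub>v z" for z c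
    using that perm_mat_carrier by (simp add: mult_mat_vec smult_smult_assoc mult.commute)
  hence "\<forall>z\<in>set (map (\<lambda>z. a \<cdot>\<^sub>v z) xs). z \<in> carrier_vec N \<and> (\<exists>c. c \<noteq> 1 \<and> P\<sigma> *\<^sub>v z = c \<cdot>\<^sub>v z)"
    using x(2) by fastforce
  ultimately show ?thesis unfolding Mspace_def by blast
qed

lemma Mspace_vsum: "set zs \<subseteq> M\<sigma> \<Longrightarrow> vsum N zs \<in> M\<sigma>"
  by (induction zs) (auto intro: zero_in_Mspace Mspace_add)

lemma Mspace_lincomb: "set bs \<subseteq> M\<sigma> \<Longrightarrow> lincomb N c bs \<in> M\<sigma>"
  unfolding lincomb_def by (intro Mspace_vsum) (auto intro!: Mspace_smult simp: nth_mem subsetD)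

lemma eigenvector_orbit_sum_eq_0:
  assumes y: "y \<in> carrier_vec N" and eig: "P\<sigma> *\<^sub>v y = c \<cdot>\<^sub>v y" and c: "c \<noteq> 1" and i: "i < N"
  shows "(\<Sum>k\<in>orbit \<sigma> i. y $ k) = 0"
proof -
  have O: "orbit \<sigma> i \<subseteq> {..<N}" by (rule orbit_subset_range[OF i])
  have inj: "inj_on \<sigma> (orbit \<sigma> i)" using permutes_inj[OF permutes] by (rule inj_on_subset) simp
  have "c * (\<Sum>k\<in>orbit \<sigma> i. y $ k) = (\<Sum>k\<in>orbit \<sigma> i. (P\<sigma> *\<^sub>v y) $ k)"
    using eig y O by (auto simp: sum_distrib_left intro!: sum.cong)
  also have "\<dots> = (\<Sum>k\<in>orbit \<sigma> i. y $ inv\<sigma> k)"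
    using y O by (intro sum.cong) (auto simp: index_perm_mat_mult_vec)
  also have "\<dots> = (\<Sum>k\<in>\<sigma> ` orbit \<sigma> i. y $ inv\<sigma> k)" by (simp only: image_orbit_eq)
  also have "\<dots> = (\<Sum>k\<in>orbit \<sigma> i. y $ k)"
    using inj by (simp add: sum.reindex permutes_inverses[OF permutes])
  finally have "(c - 1) * (\<Sum>k\<in>orbit \<sigma> i. y $ k) = 0" by (simp add: algebra_simps)
  thus ?thesis using c by simp
qed

lemma Mspace_orbit_sum_eq_0:
  assumes x: "x \<in> M\<sigma>" and i: "i < N"
  shows "(\<Sum>k\<in>orbit \<sigma> i. x $ k) = 0"
proof -
  obtain ys where x_eq: "x = vsum N ys"
    and ys: "\<forall>y\<in>set ys. y \<in> carrier_vec N \<and> (\<exists>c. c \<noteq> 1 \<and> P\<sigma> *\<^sub>v y = c \<cdot>\<^sub>v y)"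
    using x unfolding Mspace_def by blast
  have O: "orbit \<sigma> i \<subseteq> {..<N}" by (rule orbit_subset_range[OF i])
  have "(\<Sum>k\<in>orbit \<sigma> i. x $ k) = (\<Sum>k\<in>orbit \<sigma> i. \<Sum>y\<leftarrow>ys. y $ k)"
  proof (intro sum.cong refl)
    fix k assume "k \<in> orbit \<sigma> i"
    thus "x $ k = (\<Sum>y\<leftarrow>ys. y $ k)" using O ys unfolding x_eq by (intro index_vsum) auto
  qed
  also have "\<dots> = 0" using ys
  proof (induction ys)
    case (Cons y ys)
    then obtain c where "y \<in> carrier_vec N" "P\<sigma> *\<^sub>v y = c \<cdot>\<^sub>v y" "c \<noteq> 1" by auto
    hence "(\<Sum>k\<in>orbit \<sigma> i. y $ k) = 0" using eigenvector_orbit_sum_eq_0[OF _ _ _ i] by blast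
    thus ?case using Cons by (simp add: sum.distrib)
  qed simp
  finally show ?thesis .
qed

text \<open>For \<open>\<sigma> ^^ p = id\<close>, \<open>eig_proj p x z\<close> is \<open>p\<close> times the component of \<open>x\<close> in the
  \<open>z\<close>-eigenspace of \<open>P\<sigma>\<close>.\<close>

definition eig_proj :: "nat \<Rightarrow> complex vec \<Rightarrow> complex \<Rightarrow> complex vec" where
  "eig_proj p x z = vec N (\<lambda>l. \<Sum>t<p. z ^ t * x $ ((\<sigma> ^^ t) l))"

lemma eig_proj_eigenvector:
  assumes p: "\<sigma> ^^ p = id" and z: "z ^ p = 1"
  shows "P\<sigma> *\<^sub>v eig_proj p x z = z \<cdot>\<^sub>v eig_proj p x z"
proof (rule eq_vecI)
  fix l assume "l < dim_vec (z \<cdot>\<^sub>v eig_proj p x z)"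
  hence l: "l < N" by (simp add: eig_proj_def)
  define k where "k = inv\<sigma> l"
  have k: "k < N" unfolding k_def by (rule inv_less[OF l])
  have lk: "l = \<sigma> k" unfolding k_def by (simp add: permutes_inverses[OF permutes])
  define g where "g = (\<lambda>t. z ^ t * x $ ((\<sigma> ^^ t) k))"
  have "(P\<sigma> *\<^sub>v eig_proj p x z) $ l = eig_proj p x z $ k"
    using index_perm_mat_mult_vec[OF _ l] unfolding k_def by (simp add: eig_proj_def)
  also have "\<dots> = (\<Sum>t<p. g t)" using k by (simp add: eig_proj_def g_def)
  also have "\<dots> = (\<Sum>t<p. g (Suc t))"
    by (rule sum_lessThan_shift_periodic[symmetric]) (simp add: g_def z p)
  also have "\<dots> = z * (\<Sum>t<p. z ^ t * x $ ((\<sigma> ^^ t) l))"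
    unfolding g_def lk by (simp add: sum_distrib_left funpow_Suc_right mult_ac del: funpow.simps)
  also have "\<dots> = (z \<cdot>\<^sub>v eig_proj p x z) $ l" using l by (simp add: eig_proj_def)
  finally show "(P\<sigma> *\<^sub>v eig_proj p x z) $ l = (z \<cdot>\<^sub>v eig_proj p x z) $ l" .
qed (simp add: eig_proj_def perm_mat_def)

lemma sum_eig_proj:
  assumes p: "\<sigma> ^^ p = id" "p > 0" and l: "l < N"
  shows "(\<Sum>z\<in>{z. z ^ p = 1}. eig_proj p x z $ l) = of_nat p * x $ l"
proof -
  have "(\<Sum>z\<in>{z. z ^ p = 1}. eig_proj p x z $ l)
      = (\<Sum>t<p. (\<Sum>z\<in>{z::complex. z ^ p = 1}. z ^ t) * x $ ((\<sigma> ^^ t) l))"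
    using l by (simp add: eig_proj_def sum_distrib_right sum.swap[of _ "{z. z ^ p = 1}"])
  also have "\<dots> = (\<Sum>t<p. if t = 0 then of_nat p * x $ l else 0)"
  proof (intro sum.cong refl)
    fix t assume t: "t \<in> {..<p}"
    show "(\<Sum>z\<in>{z::complex. z ^ p = 1}. z ^ t) * x $ ((\<sigma> ^^ t) l) = (if t = 0 then of_nat p * x $ l else 0)"
    proof (cases "t = 0")
      case True thus ?thesis using card_roots_unity_eq[OF p(2)] by simp
    next
      case False
      hence "\<not> p dvd t" using t by (auto dest: dvd_imp_le)
      thus ?thesis using sum_roots_unity_power_eq_0[OF p(2)] False by simp
    qed
  qed
  also have "\<dots> = of_nat p * x $ l" using p(2) by simp
  finally show ?thesis .
qed

lemma eig_proj_1_unit_diff: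
  assumes p: "\<sigma> ^^ p = id" and l: "l < N"
  shows "eig_proj p (unit_vec N j - unit_vec N (\<sigma> j)) 1 $ l = 0"
proof -
  define g where "g = (\<lambda>t. if (\<sigma> ^^ t) l = \<sigma> j then (1::complex) else 0)"
  have "\<sigma> ((\<sigma> ^^ t) l) = \<sigma> j \<longleftrightarrow> (\<sigma> ^^ t) l = j" for t
    using permutes_inj[OF permutes] by (auto dest: injD)
  hence shift: "g (Suc t) = (if (\<sigma> ^^ t) l = j then 1 else 0)" for t by (simp add: g_def)
  have "eig_proj p (unit_vec N j - unit_vec N (\<sigma> j)) 1 $ l
      = (\<Sum>t<p. (if (\<sigma> ^^ t) l = j then 1 else 0) - g t)"
  proof -
    have "(\<sigma> ^^ t) l < N" for t using permutes_in_funpow_image[OF permutes, of l] l by simp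
    thus ?thesis using l by (simp add: eig_proj_def g_def unit_vec_def)
  qed
  also have "\<dots> = (\<Sum>t<p. g (Suc t)) - (\<Sum>t<p. g t)"
    by (simp add: sum_subtractf shift)
  also have "(\<Sum>t<p. g (Suc t)) = (\<Sum>t<p. g t)"
    by (rule sum_lessThan_shift_periodic) (simp add: g_def p)
  finally show ?thesis by simp
qed

lemma unit_diff_in_Mspace:
  assumes j: "j < N"
  shows "unit_vec N j - unit_vec N (\<sigma> j) \<in> M\<sigma>"
proof -
  define x :: "complex vec" where "x = unit_vec N j - unit_vec N (\<sigma> j)"
  obtain p where p: "\<sigma> ^^ p = id" "p > 0" using permutation_is_nilpotent[OF permutation] by blast
  define U where "U = {z::complex. z ^ p = 1}"
  have finU: "finite U" unfolding U_def using p(2) by (intro finite_roots_unity) simp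
  obtain zs where zs: "set zs = U - {1}" "distinct zs"
    using finite_distinct_list[of "U - {1}"] finU by auto
  define ys where "ys = map (\<lambda>z. (1 / of_nat p) \<cdot>\<^sub>v eig_proj p x z) zs"
  have "eig_proj p x z \<in> M\<sigma>" if "z \<in> U - {1}" for z
    using that eig_proj_eigenvector[OF p(1)] unfolding U_def
    by (intro eigenvector_in_Mspace) (auto simp: eig_proj_def)
  hence ys_M: "set ys \<subseteq> M\<sigma>" unfolding ys_def using zs(1) by (auto intro: Mspace_smult)
  have ys_carrier: "set ys \<subseteq> carrier_vec N" unfolding ys_def by (auto simp: eig_proj_def)
  have "vsum N ys = x"
  proof (rule eq_vecI)
    show "dim_vec (vsum N ys) = dim_vec x" using vsum_carrier[OF ys_carrier] by (simp add: x_def)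
    fix l assume "l < dim_vec x"
    hence l: "l < N" by (simp add: x_def)
    have "vsum N ys $ l = (\<Sum>y\<leftarrow>ys. y $ l)" by (rule index_vsum[OF ys_carrier l])
    also have "\<dots> = (\<Sum>z\<leftarrow>zs. (1 / of_nat p) * eig_proj p x z $ l)"
      using l by (simp add: ys_def o_def eig_proj_def)
    also have "\<dots> = (\<Sum>z\<in>U - {1}. (1 / of_nat p) * eig_proj p x z $ l)"
      by (simp add: sum.distinct_set_conv_list[OF zs(2), symmetric] zs(1))
    also have "\<dots> = (1 / of_nat p) * (\<Sum>z\<in>U. eig_proj p x z $ l)"
    proof -
      have "(\<Sum>z\<in>U. eig_proj p x z $ l) = eig_proj p x 1 $ l + (\<Sum>z\<in>U - {1}. eig_proj p x z $ l)"
        using finU by (rule sum.remove) (simp add: U_def)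
      thus ?thesis using eig_proj_1_unit_diff[OF p(1) l, of j, folded x_def] by (simp add: sum_distrib_left)
    qed
    also have "\<dots> = x $ l" using sum_eig_proj[OF p l] p(2) unfolding U_def by simp
    finally show "vsum N ys $ l = x $ l" .
  qed
  thus ?thesis using Mspace_vsum[OF ys_M] unfolding x_def by simp
qed

lemma unit_diff_funpow_in_Mspace:
  assumes k: "k < N"
  shows "unit_vec N k - unit_vec N ((\<sigma> ^^ s) k) \<in> M\<sigma>"
proof (induction s)
  case 0
  have "unit_vec N k - unit_vec N k = (0\<^sub>v N :: complex vec)" by (rule minus_cancel_vec) simp
  thus ?case using zero_in_Mspace by (metis funpow_0)
next
  case (Suc s)
  define j where "j = (\<sigma> ^^ s) k"
  have "unit_vec N k - unit_vec N ((\<sigma> ^^ Suc s) k)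
      = (unit_vec N k - unit_vec N j :: complex vec) + (unit_vec N j - unit_vec N (\<sigma> j))"
    unfolding j_def by (intro eq_vecI) auto
  moreover have "j < N" unfolding j_def using permutes_in_funpow_image[OF permutes] k by simp
  ultimately show ?case using Suc Mspace_add unit_diff_in_Mspace unfolding j_def by simp
qed

definition cycle_min :: "nat \<Rightarrow> nat" where
  "cycle_min k = Min (orbit \<sigma> k)"

definition nonmin :: "nat set" where
  "nonmin = {k. k < N \<and> k \<noteq> cycle_min k}"

definition nonmin_list :: "nat list" where
  "nonmin_list = sorted_list_of_set nonmin"

definition Mbasis :: "complex vec list" where
  "Mbasis = map (\<lambda>k. unit_vec N k - unit_vec N (cycle_min k)) nonmin_list"

lemma cycle_min_in_orbit: "cycle_min k \<in> orbit \<sigma> k"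
  unfolding cycle_min_def using finite_orbit_perm self_in_orbit by (intro Min_in) auto

lemma cycle_min_less: "k < N \<Longrightarrow> cycle_min k < N"
  using cycle_min_in_orbit orbit_subset_range by blast

lemma cycle_min_eq: "l \<in> orbit \<sigma> k \<Longrightarrow> cycle_min l = cycle_min k"
  unfolding cycle_min_def using orbit_eq_if_mem by simp

lemma cycle_min_idem: "cycle_min (cycle_min k) = cycle_min k"
  using cycle_min_eq cycle_min_in_orbit by blast

lemma finite_nonmin: "finite nonmin"
  unfolding nonmin_def by simp

lemma set_nonmin_list: "set nonmin_list = nonmin" and distinct_nonmin_list: "distinct nonmin_list"
  unfolding nonmin_list_def using finite_nonmin by auto

lemma nonmin_list_less: "i < length nonmin_list \<Longrightarrow> nonmin_list ! i < N"
  using set_nonmin_list nth_mem unfolding nonmin_def by fastforce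

lemma length_Mbasis: "length Mbasis = length nonmin_list"
  unfolding Mbasis_def by simp

lemma Mbasis_carrier: "set Mbasis \<subseteq> carrier_vec N"
  unfolding Mbasis_def by auto

lemma index_Mbasis:
  assumes i: "i < length nonmin_list" and l: "l < N"
  shows "Mbasis ! i $ l = (if l = nonmin_list ! i then 1 else 0) - (if l = cycle_min (nonmin_list ! i) then 1 else 0)"
  using i l cycle_min_less[OF nonmin_list_less[OF i]] nonmin_list_less[OF i] by (simp add: Mbasis_def)

lemma cycle_min_notin_nonmin: "k \<in> nonmin \<Longrightarrow> cycle_min k \<notin> nonmin"
  unfolding nonmin_def using cycle_min_idem by simp

lemma sum_nonmin_list: "(\<Sum>i<length nonmin_list. f (nonmin_list ! i)) = (\<Sum>k\<in>nonmin. f k)"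
  using bij_betw_nth[OF distinct_nonmin_list refl set_nonmin_list[symmetric]]
  by (rule sum.reindex_bij_betw)

lemma nonmin_cycle_min_fiber:
  assumes "l < N" and "cycle_min l = l"
  shows "{k \<in> nonmin. cycle_min k = l} = orbit \<sigma> l - {l}"
proof
  show "{k \<in> nonmin. cycle_min k = l} \<subseteq> orbit \<sigma> l - {l}"
    unfolding nonmin_def using cycle_min_in_orbit orbit_eq_if_mem self_in_orbit by fastforce
  show "orbit \<sigma> l - {l} \<subseteq> {k \<in> nonmin. cycle_min k = l}"
    unfolding nonmin_def using assms cycle_min_eq orbit_subset_range by fastforce
qed

lemma Mbasis_subset_Mspace: "set Mbasis \<subseteq> M\<sigma>"
proof
  fix y assume "y \<in> set Mbasis"
  then obtain k where k: "k \<in> nonmin" "y = unit_vec N k - unit_vec N (cycle_min k)"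
    unfolding Mbasis_def using set_nonmin_list by auto
  obtain s where "cycle_min k = (\<sigma> ^^ s) k"
    using cycle_min_in_orbit[of k] unfolding orbit_eq_funpow_image by auto
  thus "y \<in> M\<sigma>" using unit_diff_funpow_in_Mspace k unfolding nonmin_def by simp
qed

lemma Mbasis_independent:
  assumes "lincomb N c Mbasis = 0\<^sub>v N"
  shows "\<forall>i<length Mbasis. c i = 0"
proof (intro allI impI)
  fix i assume "i < length Mbasis"
  hence i: "i < length nonmin_list" by (simp add: length_Mbasis)
  define l where "l = nonmin_list ! i"
  have l_nonmin: "l \<in> nonmin" unfolding l_def using set_nonmin_list i nth_mem by blast
  have l: "l < N" unfolding l_def by (rule nonmin_list_less[OF i])
  have "0 = lincomb N c Mbasis $ l" using assms l by simp
  also have "\<dots> = (\<Sum>i'<length nonmin_list. if i' = i then c i' else 0)"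
    unfolding index_lincomb[OF Mbasis_carrier l] length_Mbasis
  proof (intro sum.cong refl)
    fix i' assume "i' \<in> {..<length nonmin_list}"
    hence i': "i' < length nonmin_list" by simp
    have "nonmin_list ! i' \<in> nonmin" using set_nonmin_list i' nth_mem by blast
    hence "l \<noteq> cycle_min (nonmin_list ! i')" using cycle_min_notin_nonmin l_nonmin by metis
    moreover have "l = nonmin_list ! i' \<longleftrightarrow> i' = i"
      unfolding l_def using distinct_nonmin_list i i' nth_eq_iff_index_eq by metis
    ultimately show "c i' * Mbasis ! i' $ l = (if i' = i then c i' else 0)"
      using index_Mbasis[OF i' l] by simp
  qed
  also have "\<dots> = c i" using i by simp
  finally show "c i = 0" by simp
qed

lemma Mbasis_spans:
  assumes x: "x \<in> M\<sigma>"
  shows "x = lincomb N (\<lambda>i. x $ (nonmin_list ! i)) Mbasis"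
proof (rule eq_vecI)
  show "dim_vec x = dim_vec (lincomb N (\<lambda>i. x $ (nonmin_list ! i)) Mbasis)"
    using Mspace_carrier[OF x] lincomb_carrier[OF Mbasis_carrier, THEN carrier_vecD] by simp
  fix l assume "l < dim_vec (lincomb N (\<lambda>i. x $ (nonmin_list ! i)) Mbasis)"
  hence l: "l < N" using lincomb_carrier[OF Mbasis_carrier, THEN carrier_vecD] by simp
  have "lincomb N (\<lambda>i. x $ (nonmin_list ! i)) Mbasis $ l
      = (\<Sum>k\<in>nonmin. x $ k * ((if l = k then 1 else 0) - (if l = cycle_min k then 1 else 0)))"
    unfolding index_lincomb[OF Mbasis_carrier l] length_Mbasis sum_nonmin_list[symmetric]
    using index_Mbasis l by (intro sum.cong) auto
  also have "\<dots> = (\<Sum>k\<in>nonmin. if l = k then x $ k else 0) - (\<Sum>k\<in>nonmin. if cycle_min k = l then x $ k else 0)"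
    unfolding sum_subtractf[symmetric] by (intro sum.cong) auto
  also have "\<dots> = x $ l"
  proof (cases "l \<in> nonmin")
    case True
    hence "(\<Sum>k\<in>nonmin. if cycle_min k = l then x $ k else 0) = 0"
      using cycle_min_notin_nonmin by (intro sum.neutral) auto
    thus ?thesis using True finite_nonmin by simp
  next
    case False
    hence min: "cycle_min l = l" using l unfolding nonmin_def by simp
    have "(\<Sum>k\<in>nonmin. if cycle_min k = l then x $ k else 0) = (\<Sum>k\<in>{k \<in> nonmin. cycle_min k = l}. x $ k)"
      using finite_nonmin by (simp add: sum.inter_filter)
    also have "\<dots> = (\<Sum>k\<in>orbit \<sigma> l - {l}. x $ k)" by (simp only: nonmin_cycle_min_fiber[OF l min])
    also have "\<dots> = - x $ l"
      using Mspace_orbit_sum_eq_0[OF x l] finite_orbit_perm self_in_orbit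
      by (simp add: sum_diff1 eq_neg_iff_add_eq_0)
    finally show ?thesis using False finite_nonmin by simp
  qed
  finally show "x $ l = lincomb N (\<lambda>i. x $ (nonmin_list ! i)) Mbasis $ l" by simp
qed

lemma Mbasis_is_basis: "is_basis N Mbasis M\<sigma>"
  unfolding is_basis_def
  using Mbasis_carrier Mbasis_independent Mbasis_spans Mspace_lincomb[OF Mbasis_subset_Mspace]
  by blast

lemma card_cycle_support_le: "I \<in> C\<sigma> \<Longrightarrow> card I \<le> N"
  by (metis cycle_supportsE orbit_subset_range card_lessThan card_mono finite_lessThan)

lemma nonmin_inter_orbit: "i < N \<Longrightarrow> nonmin \<inter> orbit \<sigma> i = orbit \<sigma> i - {cycle_min i}"
  unfolding nonmin_def using cycle_min_eq orbit_subset_range by fastforce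

lemma sum_nonmin_cycle_weights:
  "(\<Sum>k\<in>nonmin. \<alpha> (orbit \<sigma> k)) = (\<Sum>I\<in>C\<sigma>. \<alpha> I * (card I - 1))"
proof -
  have "(\<Sum>k\<in>nonmin. \<alpha> (orbit \<sigma> k)) = (\<Sum>k<N. if k \<in> nonmin then \<alpha> (orbit \<sigma> k) else 0)"
    by (subst sum.inter_restrict[symmetric]) (auto simp: nonmin_def intro: sum.cong)
  also have "\<dots> = (\<Sum>I\<in>C\<sigma>. \<Sum>k\<in>I. if k \<in> nonmin then \<alpha> I else 0)"
    unfolding sum_over_cycle_supports by (intro sum.cong refl) (auto simp: mem_cycle_support_iff)
  also have "\<dots> = (\<Sum>I\<in>C\<sigma>. \<alpha> I * (card I - 1))"
  proof (intro sum.cong refl)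
    fix I assume "I \<in> C\<sigma>"
    then obtain i where i: "i < N" "I = orbit \<sigma> i" by (rule cycle_supportsE)
    have "(\<Sum>k\<in>I. if k \<in> nonmin then \<alpha> I else 0) = (\<Sum>k\<in>I \<inter> nonmin. \<alpha> I)"
      using i finite_orbit_perm by (simp add: sum.inter_restrict[symmetric])
    also have "I \<inter> nonmin = I - {cycle_min i}" using nonmin_inter_orbit[OF i(1)] i(2) by blast
    finally show "(\<Sum>k\<in>I. if k \<in> nonmin then \<alpha> I else 0) = \<alpha> I * (card I - 1)"
      using i finite_orbit_perm cycle_min_in_orbit by (simp add: mult.commute)
  qed
  finally show ?thesis .
qed

end

lemma diag_el_eq_mat_diag: "diag_el N a = mat_diag N (\<lambda>i. zeta N ^ a i)"
  unfolding diag_el_def mat_diag_def by (intro eq_matI) auto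

lemma det_mat_diag: "det (mat_diag n f) = (\<Prod>i<n. f i)"
proof -
  have "det (mat_diag n f) = prod_list (diag_mat (mat_diag n f))"
    by (rule det_upper_triangular) (auto simp: upper_triangular_def mat_diag_def)
  also have "diag_mat (mat_diag n f) = map f [0..<n]" by (simp add: diag_mat_def mat_diag_def)
  finally show ?thesis by (simp add: prod.distinct_set_conv_list[symmetric] atLeast0LessThan)
qed

lemma index_mat_diag_mult_vec:
  assumes "y \<in> carrier_vec n" and "l < n"
  shows "(mat_diag n f *\<^sub>v y) $ l = f l * y $ l"
proof -
  have "(mat_diag n f *\<^sub>v y) $ l = (\<Sum>j<n. (if l = j then f j else 0) * y $ j)"
    using assms by (simp add: mat_diag_def scalar_prod_def row_def atLeast0LessThan)
  also have "\<dots> = (\<Sum>j<n. if j = l then f l * y $ l else 0)" by (intro sum.cong) auto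
  finally show ?thesis using assms(2) by simp
qed

context perm_range
begin

definition cycle_diag :: "(nat set \<Rightarrow> nat) \<Rightarrow> complex mat" where
  "cycle_diag \<alpha> = diag_el N (\<lambda>k. \<alpha> (orbit \<sigma> k))"

lemma cycle_diag_carrier: "cycle_diag \<alpha> \<in> carrier_mat N N"
  by (simp add: cycle_diag_def diag_el_eq_mat_diag)

lemma dim_cycle_diag [simp]: "dim_row (cycle_diag \<alpha>) = N" "dim_col (cycle_diag \<alpha>) = N"
  using cycle_diag_carrier by auto

lemma cycle_diag_commute: "cycle_diag \<alpha> * P\<sigma> = P\<sigma> * cycle_diag \<alpha>"
proof -
  define f where "f = (\<lambda>k. zeta N ^ \<alpha> (orbit \<sigma> k))"
  have "mat_diag N f * P\<sigma> = mat N N (\<lambda>(i,j). f i * P\<sigma> $$ (i,j))"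
    by (rule mat_diag_mult_left[OF perm_mat_carrier])
  also have "\<dots> = mat N N (\<lambda>(i,j). P\<sigma> $$ (i,j) * f j)"
    by (intro eq_matI) (auto simp: perm_mat_def f_def orbit_apply_eq)
  also have "\<dots> = P\<sigma> * mat_diag N f"
    by (rule mat_diag_mult_right[OF perm_mat_carrier, symmetric])
  finally show ?thesis by (simp add: cycle_diag_def diag_el_eq_mat_diag f_def)
qed

lemma sum_cycle_weights: "(\<Sum>k<N. \<alpha> (orbit \<sigma> k)) = (\<Sum>I\<in>C\<sigma>. \<alpha> I * card I)"
proof -
  have "(\<Sum>k\<in>I. \<alpha> (orbit \<sigma> k)) = \<alpha> I * card I" if "I \<in> C\<sigma>" for I
  proof -
    have "(\<Sum>k\<in>I. \<alpha> (orbit \<sigma> k)) = (\<Sum>k\<in>I. \<alpha> I)"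
      using mem_cycle_support_iff[OF that] by (intro sum.cong) auto
    thus ?thesis by (simp add: mult.commute)
  qed
  thus ?thesis unfolding sum_over_cycle_supports by simp
qed

lemma cycle_diag_in_centralizer:
  assumes N: "N > 0" and S_id: "id \<in> S" and weights: "N dvd (\<Sum>I\<in>C\<sigma>. \<alpha> I * card I)"
  shows "cycle_diag \<alpha> \<in> centralizer (Ggrp N S) P\<sigma>"
proof -
  have "det (cycle_diag \<alpha>) = zeta N ^ (\<Sum>k<N. \<alpha> (orbit \<sigma> k))"
    by (simp add: cycle_diag_def diag_el_eq_mat_diag det_mat_diag power_sum)
  also have "\<dots> = 1"
    using weights cis_power_eq_1_iff[OF N] unfolding sum_cycle_weights zeta_def by simp
  finally have "cycle_diag \<alpha> \<in> SLf N" unfolding SLf_def Gd_def cycle_diag_def by blast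
  moreover have "perm_mat N id = 1\<^sub>m N" unfolding perm_mat_def by (intro eq_matI) auto
  ultimately have "cycle_diag \<alpha> \<in> Ggrp N S"
    unfolding Ggrp_def using S_id left_mult_one_mat[OF cycle_diag_carrier]
    by (intro CollectI exI[of _ id] exI[of _ "cycle_diag \<alpha>"]) auto
  thus ?thesis unfolding centralizer_def using cycle_diag_commute by simp
qed

lemma cycle_diag_mult_Mbasis:
  assumes j: "j < length Mbasis"
  shows "cycle_diag \<alpha> *\<^sub>v Mbasis ! j = zeta N ^ \<alpha> (orbit \<sigma> (nonmin_list ! j)) \<cdot>\<^sub>v Mbasis ! j"
proof (rule eq_vecI)
  have j': "j < length nonmin_list" using j by (simp add: length_Mbasis)
  have bj: "Mbasis ! j \<in> carrier_vec N" using Mbasis_carrier j nth_mem by blast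
  thus "dim_vec (cycle_diag \<alpha> *\<^sub>v Mbasis ! j) = dim_vec (zeta N ^ \<alpha> (orbit \<sigma> (nonmin_list ! j)) \<cdot>\<^sub>v Mbasis ! j)"
    using cycle_diag_carrier by simp
  fix l assume "l < dim_vec (zeta N ^ \<alpha> (orbit \<sigma> (nonmin_list ! j)) \<cdot>\<^sub>v Mbasis ! j)"
  hence l: "l < N" using bj by simp
  have "orbit \<sigma> (cycle_min (nonmin_list ! j)) = orbit \<sigma> (nonmin_list ! j)"
    by (rule orbit_eq_if_mem[OF cycle_min_in_orbit])
  thus "(cycle_diag \<alpha> *\<^sub>v Mbasis ! j) $ l = (zeta N ^ \<alpha> (orbit \<sigma> (nonmin_list ! j)) \<cdot>\<^sub>v Mbasis ! j) $ l"
    using bj l index_Mbasis[OF j' l]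
    by (auto simp: cycle_diag_def diag_el_eq_mat_diag index_mat_diag_mult_vec)
qed

lemma det_restr_cycle_diag:
  "det_restr N (cycle_diag \<alpha>) M\<sigma> = zeta N ^ (\<Sum>I\<in>C\<sigma>. \<alpha> I * (card I - 1))"
proof -
  define A where "A = mat_diag (length Mbasis) (\<lambda>i. zeta N ^ \<alpha> (orbit \<sigma> (nonmin_list ! i)))"
  have "det_restr N (cycle_diag \<alpha>) M\<sigma> = det A"
  proof (rule det_restr_eqI[OF Mbasis_is_basis cycle_diag_carrier])
    show "A \<in> carrier_mat (length Mbasis) (length Mbasis)" by (simp add: A_def)
    show "\<forall>j<length Mbasis. cycle_diag \<alpha> *\<^sub>v Mbasis ! j = lincomb N (\<lambda>i. A $$ (i, j)) Mbasis"
      using cycle_diag_mult_Mbasis lincomb_single[OF Mbasis_carrier] by (simp add: A_def mat_diag_def)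
  qed
  also have "\<dots> = zeta N ^ (\<Sum>k\<in>nonmin. \<alpha> (orbit \<sigma> k))"
    by (simp add: A_def det_mat_diag length_Mbasis power_sum sum_nonmin_list[symmetric])
  finally show ?thesis by (simp only: sum_nonmin_cycle_weights)
qed

section \<open>The fixed space \<open>Fix(\<sigma>)\<close> in coordinates indexed by the cycles\<close>

definition cycle_vec :: "(nat set \<Rightarrow> complex) \<Rightarrow> complex vec" where
  "cycle_vec \<phi> = vec N (\<lambda>k. \<phi> (orbit \<sigma> k))"

lemma cycle_vec_carrier: "cycle_vec \<phi> \<in> carrier_vec N"
  by (simp add: cycle_vec_def)

lemma cycle_vec_in_Fix: "cycle_vec \<phi> \<in> Fix N P\<sigma>"
proof -
  have "P\<sigma> *\<^sub>v cycle_vec \<phi> = cycle_vec \<phi>"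
  proof (rule eq_vecI)
    fix l assume "l < dim_vec (cycle_vec \<phi>)"
    hence l: "l < N" by (simp add: cycle_vec_def)
    show "(P\<sigma> *\<^sub>v cycle_vec \<phi>) $ l = cycle_vec \<phi> $ l"
      unfolding index_perm_mat_mult_vec[OF cycle_vec_carrier l]
      using l inv_less[OF l] by (simp add: cycle_vec_def orbit_inv_apply_eq)
  qed (use perm_mat_carrier in \<open>simp add: cycle_vec_def\<close>)
  thus ?thesis unfolding Fix_def using cycle_vec_carrier by simp
qed

lemma cycle_vec_upd:
  "cycle_vec (\<phi>(J := t)) = cycle_vec (\<phi>(J := 0)) + t \<cdot>\<^sub>v cycle_vec (\<lambda>I. if I = J then 1 else 0)"
  unfolding cycle_vec_def by (intro eq_vecI) auto

lemma poly_on_lines_cycle_vec_upd: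
  assumes "poly_on_lines N D h"
  shows "\<exists>q. degree q \<le> D \<and> (\<forall>t. h (cycle_vec (\<phi>(J := t))) = poly q t)"
proof -
  obtain q where q: "degree q \<le> D"
    "\<forall>t. h (cycle_vec (\<phi>(J := 0)) + t \<cdot>\<^sub>v cycle_vec (\<lambda>I. if I = J then 1 else 0)) = poly q t"
    using assms cycle_vec_carrier unfolding poly_on_lines_def by meson
  have "h (cycle_vec (\<phi>(J := t))) = poly q t" for t
    by (subst cycle_vec_upd) (rule q(2)[rule_format])
  thus ?thesis using q(1) by blast
qed

lemma sum_cycle_vec:
  assumes "I \<in> C\<sigma>"
  shows "(\<Sum>k\<in>I. cycle_vec \<phi> $ k) = of_nat (card I) * \<phi> I"
proof -
  have "(\<Sum>k\<in>I. cycle_vec \<phi> $ k) = (\<Sum>k\<in>I. \<phi> I)"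
    using mem_cycle_support_iff[OF assms] by (intro sum.cong) (auto simp: cycle_vec_def)
  thus ?thesis by simp
qed

lemma cycle_diag_mult_cycle_vec:
  "cycle_diag \<alpha> *\<^sub>v cycle_vec \<phi> = cycle_vec (\<lambda>I. zeta N ^ \<alpha> I * \<phi> I)"
proof (rule eq_vecI)
  fix l assume "l < dim_vec (cycle_vec (\<lambda>I. zeta N ^ \<alpha> I * \<phi> I))"
  hence l: "l < N" by (simp add: cycle_vec_def)
  show "(cycle_diag \<alpha> *\<^sub>v cycle_vec \<phi>) $ l = cycle_vec (\<lambda>I. zeta N ^ \<alpha> I * \<phi> I) $ l"
    unfolding cycle_diag_def diag_el_eq_mat_diag index_mat_diag_mult_vec[OF cycle_vec_carrier l]
    using l by (simp add: cycle_vec_def)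
qed (simp add: cycle_vec_def)

lemma cycle_monomial_cycle_vec:
  "(\<Prod>I\<in>C\<sigma>. (\<Sum>k\<in>I. cycle_vec \<phi> $ k) ^ r I)
    = (\<Prod>I\<in>C\<sigma>. of_nat (card I) ^ r I) * (\<Prod>I\<in>C\<sigma>. \<phi> I ^ r I)"
proof -
  have "(\<Prod>I\<in>C\<sigma>. (\<Sum>k\<in>I. cycle_vec \<phi> $ k) ^ r I) = (\<Prod>I\<in>C\<sigma>. of_nat (card I) ^ r I * \<phi> I ^ r I)"
    by (intro prod.cong refl) (simp add: sum_cycle_vec power_mult_distrib)
  thus ?thesis by (simp only: prod.distrib)
qed

lemma cycle_monomial_cycle_diag_mult:
  "(\<Prod>I\<in>C\<sigma>. (\<Sum>k\<in>I. (cycle_diag \<alpha> *\<^sub>v cycle_vec \<phi>) $ k) ^ r I)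
    = zeta N ^ (\<Sum>I\<in>C\<sigma>. \<alpha> I * r I) * (\<Prod>I\<in>C\<sigma>. (\<Sum>k\<in>I. cycle_vec \<phi> $ k) ^ r I)"
proof -
  have "(\<Prod>I\<in>C\<sigma>. (\<Sum>k\<in>I. (cycle_diag \<alpha> *\<^sub>v cycle_vec \<phi>) $ k) ^ r I)
      = (\<Prod>I\<in>C\<sigma>. (zeta N ^ \<alpha> I) ^ r I * (\<Sum>k\<in>I. cycle_vec \<phi> $ k) ^ r I)"
    unfolding cycle_diag_mult_cycle_vec
    by (intro prod.cong refl) (simp add: sum_cycle_vec power_mult_distrib mult_ac)
  thus ?thesis by (simp add: prod.distrib power_sum power_mult)
qed

lemma dir_deriv_fermat_cycle_vec:
  assumes w: "w \<in> carrier_vec N"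
  shows "dir_deriv N (fermat N) w (cycle_vec \<phi>) = (\<Sum>I\<in>C\<sigma>. \<phi> I ^ (N - 1) * (of_nat N * (\<Sum>k\<in>I. w $ k)))"
proof -
  have "dir_deriv N (fermat N) w (cycle_vec \<phi>) = (\<Sum>I\<in>C\<sigma>. \<Sum>k\<in>I. of_nat N * (cycle_vec \<phi> $ k) ^ (N - 1) * w $ k)"
    unfolding dir_deriv_fermat[OF cycle_vec_carrier w] by (rule sum_over_cycle_supports)
  also have "\<dots> = (\<Sum>I\<in>C\<sigma>. \<phi> I ^ (N - 1) * (of_nat N * (\<Sum>k\<in>I. w $ k)))"
  proof (intro sum.cong refl)
    fix I assume I: "I \<in> C\<sigma>"
    have "(\<Sum>k\<in>I. of_nat N * (cycle_vec \<phi> $ k) ^ (N - 1) * w $ k) = (\<Sum>k\<in>I. \<phi> I ^ (N - 1) * (of_nat N * w $ k))"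
      using mem_cycle_support_iff[OF I] by (intro sum.cong) (auto simp: cycle_vec_def)
    thus "(\<Sum>k\<in>I. of_nat N * (cycle_vec \<phi> $ k) ^ (N - 1) * w $ k) = \<phi> I ^ (N - 1) * (of_nat N * (\<Sum>k\<in>I. w $ k))"
      by (simp add: sum_distrib_left)
  qed
  finally show ?thesis .
qed

text \<open>On \<open>Fix(\<sigma>)\<close> the restriction of \<open>f\<close> is \<open>\<Sum>\<^sub>I |I| \<phi> I ^ N\<close>, so its Jacobian ideal is
  generated by the powers \<open>\<phi> I ^ (N - 1)\<close>.\<close>

lemma jac_eq_Fix_in_cycle_coords:
  assumes "jac_eq N (fermat N) (Fix N P\<sigma>) F G"
  obtains D H where "\<forall>I. poly_on_lines N D (H I)"
    and "\<forall>\<phi>. F (cycle_vec \<phi>) - G (cycle_vec \<phi>) = (\<Sum>I\<in>C\<sigma>. \<phi> I ^ (N - 1) * H I (cycle_vec \<phi>))"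
proof -
  obtain ws hs where len: "length ws = length hs" and ws: "set ws \<subseteq> Fix N P\<sigma>"
    and hs: "set hs \<subseteq> polyfun N"
    and eq: "\<forall>x\<in>Fix N P\<sigma>. F x - G x = (\<Sum>i<length ws. (hs ! i) x * dir_deriv N (fermat N) (ws ! i) x)"
    using assms unfolding jac_eq_def by blast
  obtain D where D: "\<forall>h\<in>set hs. poly_on_lines N D h" using polyfuns_poly_on_lines[OF _ hs] by blast
  define H where "H = (\<lambda>I x. \<Sum>i<length ws. (hs ! i) x * (of_nat N * (\<Sum>k\<in>I. ws ! i $ k)))"
  have "poly_on_lines N D (H I)" for I
  proof -
    have "poly_on_lines N (D + 0) (\<lambda>x. (hs ! i) x * (of_nat N * (\<Sum>k\<in>I. ws ! i $ k)))"
      if "i < length ws" for i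
      using D len that nth_mem by (intro poly_on_lines_mult poly_on_lines_const) auto
    thus ?thesis unfolding H_def by (intro poly_on_lines_sum) auto
  qed
  moreover have "F (cycle_vec \<phi>) - G (cycle_vec \<phi>) = (\<Sum>I\<in>C\<sigma>. \<phi> I ^ (N - 1) * H I (cycle_vec \<phi>))" for \<phi>
  proof -
    have "F (cycle_vec \<phi>) - G (cycle_vec \<phi>) = (\<Sum>i<length ws. (hs ! i) (cycle_vec \<phi>) *
        (\<Sum>I\<in>C\<sigma>. \<phi> I ^ (N - 1) * (of_nat N * (\<Sum>k\<in>I. ws ! i $ k))))"
      unfolding eq[rule_format, OF cycle_vec_in_Fix]
    proof (intro sum.cong refl arg_cong2[where f = "(*)"])
      fix i assume "i \<in> {..<length ws}"
      hence "ws ! i \<in> carrier_vec N" using ws nth_mem unfolding Fix_def by blast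
      thus "dir_deriv N (fermat N) (ws ! i) (cycle_vec \<phi>)
          = (\<Sum>I\<in>C\<sigma>. \<phi> I ^ (N - 1) * (of_nat N * (\<Sum>k\<in>I. ws ! i $ k)))"
        by (rule dir_deriv_fermat_cycle_vec)
    qed
    also have "\<dots> = (\<Sum>I\<in>C\<sigma>. \<phi> I ^ (N - 1) * H I (cycle_vec \<phi>))"
      unfolding H_def by (simp add: sum_distrib_left sum_distrib_right sum.swap[of _ C\<sigma>] mult_ac)
    finally show ?thesis .
  qed
  ultimately show ?thesis using that by blast
qed

section \<open>Invariance under the diagonal elements constant on cycles\<close>

lemma det_restr_cycle_diag_eq_if_invariant:
  assumes N: "2 \<le> N" and r_less: "\<forall>I\<in>C\<sigma>. r I < N - 1"
    and invariant: "jac_eq N (fermat N) (Fix N P\<sigma>)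
          (\<lambda>x. inverse (det_restr N (cycle_diag \<alpha>) M\<sigma>) *
               (\<Prod>I\<in>C\<sigma>. (\<Sum>k\<in>I. (cycle_diag \<alpha> *\<^sub>v x) $ k) ^ r I))
          (\<lambda>x. \<Prod>I\<in>C\<sigma>. (\<Sum>k\<in>I. x $ k) ^ r I)"
  shows "det_restr N (cycle_diag \<alpha>) M\<sigma> = zeta N ^ (\<Sum>I\<in>C\<sigma>. \<alpha> I * r I)"
proof -
  define d where "d = det_restr N (cycle_diag \<alpha>) M\<sigma>"
  define Z where "Z = zeta N ^ (\<Sum>I\<in>C\<sigma>. \<alpha> I * r I)"
  define K where "K = (inverse d * Z - 1) * (\<Prod>I\<in>C\<sigma>. of_nat (card I) ^ r I)"
  obtain D H where H: "\<forall>I. poly_on_lines N D (H I)"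
    and eq: "\<forall>\<phi>. inverse d * (\<Prod>I\<in>C\<sigma>. (\<Sum>k\<in>I. (cycle_diag \<alpha> *\<^sub>v cycle_vec \<phi>) $ k) ^ r I)
        - (\<Prod>I\<in>C\<sigma>. (\<Sum>k\<in>I. cycle_vec \<phi> $ k) ^ r I) = (\<Sum>I\<in>C\<sigma>. \<phi> I ^ (N - 1) * H I (cycle_vec \<phi>))"
    using jac_eq_Fix_in_cycle_coords[OF invariant] unfolding d_def by blast
  have "K * (\<Prod>I\<in>C\<sigma>. \<phi> I ^ r I) = (\<Sum>I\<in>C\<sigma>. \<phi> I ^ (N - 1) * H I (cycle_vec \<phi>))" for \<phi>
    using eq unfolding K_def Z_def cycle_monomial_cycle_diag_mult cycle_monomial_cycle_vec
    by (simp add: algebra_simps)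
  moreover have "\<forall>I\<in>C\<sigma>. \<forall>\<phi>. \<exists>q. degree q \<le> D \<and> (\<forall>t. H I (cycle_vec (\<phi>(I := t))) = poly q t)"
    using H poly_on_lines_cycle_vec_upd by blast
  ultimately have "K = 0"
    using monomial_in_power_ideal_imp_coeff_0[OF finite_cycle_supports r_less,
        where H = "\<lambda>I \<phi>. H I (cycle_vec \<phi>)" and D = D and K = K]
    by blast
  moreover have "(\<Prod>I\<in>C\<sigma>. of_nat (card I) ^ r I :: complex) \<noteq> 0"
    using card_cycle_support_pos finite_cycle_supports by (simp add: prod_zero_iff)
  ultimately have "inverse d * Z = 1" unfolding K_def by simp
  hence "d = Z" by (cases "d = 0") (auto simp: field_simps)
  thus ?thesis unfolding d_def Z_def .
qed

lemma cycle_weights_dvd: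
  assumes N: "2 \<le> N" and S_id: "id \<in> S" and r_bound: "\<forall>I\<in>C\<sigma>. r I \<le> N - 2"
    and invariant: "\<forall>v \<in> centralizer (Ggrp N S) P\<sigma>.
        jac_eq N (fermat N) (Fix N P\<sigma>)
          (\<lambda>x. inverse (det_restr N v M\<sigma>) * (\<Prod>I\<in>C\<sigma>. (\<Sum>k\<in>I. (v *\<^sub>v x) $ k) ^ r I))
          (\<lambda>x. \<Prod>I\<in>C\<sigma>. (\<Sum>k\<in>I. x $ k) ^ r I)"
    and weights: "N dvd (\<Sum>I\<in>C\<sigma>. \<alpha> I * card I)"
  shows "N dvd (\<Sum>I\<in>C\<sigma>. \<alpha> I * (r I + 1))"
proof -
  define A where "A = (\<Sum>I\<in>C\<sigma>. \<alpha> I * (card I - 1))"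
  define R where "R = (\<Sum>I\<in>C\<sigma>. \<alpha> I * r I)"
  define T where "T = (\<Sum>I\<in>C\<sigma>. \<alpha> I)"
  have "cycle_diag \<alpha> \<in> centralizer (Ggrp N S) P\<sigma>"
    using N S_id weights by (intro cycle_diag_in_centralizer) auto
  moreover have "\<forall>I\<in>C\<sigma>. r I < N - 1" using r_bound N by fastforce
  ultimately have "det_restr N (cycle_diag \<alpha>) M\<sigma> = zeta N ^ R"
    unfolding R_def using invariant by (intro det_restr_cycle_diag_eq_if_invariant[OF N]) auto
  hence "zeta N ^ A = zeta N ^ R" unfolding A_def by (simp only: det_restr_cycle_diag)
  hence "int N dvd int A - int R" using N by (intro zeta_power_eq_imp_dvd) auto
  moreover have "(\<Sum>I\<in>C\<sigma>. \<alpha> I * card I) = A + T"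
  proof -
    have "\<alpha> I * card I = \<alpha> I * (card I - 1) + \<alpha> I" if "I \<in> C\<sigma>" for I
      using card_cycle_support_pos[OF that] by (cases "card I") auto
    hence "(\<Sum>I\<in>C\<sigma>. \<alpha> I * card I) = (\<Sum>I\<in>C\<sigma>. \<alpha> I * (card I - 1) + \<alpha> I)"
      by (intro sum.cong) auto
    thus ?thesis unfolding A_def T_def by (simp only: sum.distrib)
  qed
  hence "int N dvd int A + int T" using weights by (simp flip: of_nat_add)
  ultimately have "int N dvd (int A + int T) - (int A - int R)" by (rule dvd_diff[rotated])
  hence "int N dvd int (R + T)" by (simp add: add.commute)
  hence "N dvd R + T" by (simp only: int_dvd_int_iff)
  moreover have "(\<Sum>I\<in>C\<sigma>. \<alpha> I * (r I + 1)) = R + T"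
    unfolding R_def T_def by (simp add: sum.distrib)
  ultimately show ?thesis by simp
qed

lemma cycle_pair_dvd:
  assumes N: "2 \<le> N" and S_id: "id \<in> S" and r_bound: "\<forall>I\<in>C\<sigma>. r I \<le> N - 2"
    and invariant: "\<forall>v \<in> centralizer (Ggrp N S) P\<sigma>.
        jac_eq N (fermat N) (Fix N P\<sigma>)
          (\<lambda>x. inverse (det_restr N v M\<sigma>) * (\<Prod>I\<in>C\<sigma>. (\<Sum>k\<in>I. (v *\<^sub>v x) $ k) ^ r I))
          (\<lambda>x. \<Prod>I\<in>C\<sigma>. (\<Sum>k\<in>I. x $ k) ^ r I)"
    and I: "I \<in> C\<sigma>" and J: "J \<in> C\<sigma>"
  shows "int N dvd int (card J) * (int (r I) + 1) - int (card I) * (int (r J) + 1)"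
proof (cases "I = J")
  case False
  define \<alpha> where "\<alpha> = (\<lambda>K. if K = I then card J else if K = J then N - card I else 0)"
  have sum_\<alpha>: "(\<Sum>K\<in>C\<sigma>. \<alpha> K * f K) = card J * f I + (N - card I) * f J" for f
  proof -
    have "(\<Sum>K\<in>C\<sigma>. \<alpha> K * f K)
        = (\<Sum>K\<in>C\<sigma>. (if K = I then card J * f K else 0) + (if K = J then (N - card I) * f K else 0))"
      using False by (intro sum.cong) (auto simp: \<alpha>_def)
    thus ?thesis using I J finite_cycle_supports by (simp add: sum.distrib)
  qed
  have card_I: "card I \<le> N" by (rule card_cycle_support_le[OF I])
  have "card J * card I + (N - card I) * card J = (card I + (N - card I)) * card J"
    by (simp add: algebra_simps)
  also have "card I + (N - card I) = N" using card_I by simp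
  finally have "N dvd (\<Sum>K\<in>C\<sigma>. \<alpha> K * card K)" unfolding sum_\<alpha> by simp
  hence "N dvd card J * (r I + 1) + (N - card I) * (r J + 1)"
    using cycle_weights_dvd[OF N S_id r_bound invariant, of \<alpha>] unfolding sum_\<alpha> by blast
  hence "int N dvd int (card J * (r I + 1) + (N - card I) * (r J + 1))"
    by (simp only: int_dvd_int_iff)
  also have "int (card J * (r I + 1) + (N - card I) * (r J + 1))
      = (int (card J) * (int (r I) + 1) - int (card I) * (int (r J) + 1)) + int N * (int (r J) + 1)"
    using card_I by (simp only: of_nat_add of_nat_mult of_nat_diff of_nat_1) (simp add: algebra_simps)
  finally show ?thesis by (simp only: dvd_add_left_iff dvd_triv_left)
qed simp

end

lemma cong_quotients_eq:
  fixes p u v c d k l :: int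
  assumes p: "prime p" and u: "0 < u" "u < p" and v: "0 < v" "v < p"
    and k: "k \<in> {1..p - 1}" and l: "l \<in> {1..p - 1}"
    and uk: "u mod p = (k * c) mod p" and vl: "v mod p = (l * d) mod p"
    and uv: "p dvd d * u - c * v"
  shows "k = l"
proof -
  have "\<not> p dvd c"
  proof
    assume "p dvd c"
    hence "u mod p = 0" using uk by simp
    thus False using u by simp
  qed
  moreover have "\<not> p dvd d"
  proof
    assume "p dvd d"
    hence "v mod p = 0" using vl by simp
    thus False using v by simp
  qed
  moreover have "p dvd c * d * (k - l)"
  proof -
    have du: "p dvd u - k * c" and dv: "p dvd v - l * d" using uk vl by (simp_all add: mod_eq_dvd_iff)
    have "p dvd (d * u - c * v) - d * (u - k * c) + c * (v - l * d)"
      by (rule dvd_add[OF dvd_diff[OF uv dvd_mult[OF du]] dvd_mult[OF dv]])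
    also have "(d * u - c * v) - d * (u - k * c) + c * (v - l * d) = c * d * (k - l)"
      by (simp add: algebra_simps)
    finally show ?thesis .
  qed
  ultimately have dvd: "p dvd k - l" using p by (simp add: prime_dvd_mult_iff)
  show "k = l"
  proof (rule ccontr)
    assume "k \<noteq> l"
    hence "\<bar>p\<bar> \<le> \<bar>k - l\<bar>" using dvd by (intro dvd_imp_le_int) auto
    thus False using k l by auto
  qed
qed

theorem proposition10:
  fixes N :: nat and S :: "(nat \<Rightarrow> nat) set" and \<sigma> :: "nat \<Rightarrow> nat"
    and r :: "nat set \<Rightarrow> nat"
  assumes prime: "prime N"
    and S_perms: "\<forall>\<tau> \<in> S. \<tau> permutes {..<N}"
    and S_id: "id \<in> S"
    and S_comp: "\<forall>\<tau> \<in> S. \<forall>\<rho> \<in> S. \<tau> \<circ> \<rho> \<in> S"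
    and S_inv: "\<forall>\<tau> \<in> S. \<exists>\<rho> \<in> S. \<tau> \<circ> \<rho> = id"
    and sigma_in: "\<sigma> \<in> S"
    and r_bound: "\<forall>I \<in> cycle_supports N \<sigma>. r I \<le> N - 2"
    and invariant: "\<forall>v \<in> centralizer (Ggrp N S) (perm_mat N \<sigma>).
        jac_eq N (fermat N) (Fix N (perm_mat N \<sigma>))
          (\<lambda>x. inverse (det_restr N v (Mspace N (perm_mat N \<sigma>))) *
               (\<Prod>I \<in> cycle_supports N \<sigma>. (\<Sum>k\<in>I. (v *\<^sub>v x) $ k) ^ r I))
          (\<lambda>x. \<Prod>I \<in> cycle_supports N \<sigma>. (\<Sum>k\<in>I. x $ k) ^ r I)"
  shows "\<forall>I \<in> cycle_supports N \<sigma>. \<forall>J \<in> cycle_supports N \<sigma>. \<forall>kI kJ :: int.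
     kI \<in> {1..int N - 1} \<and> kJ \<in> {1..int N - 1} \<and>
     (int (r I) + 1) mod int N = (kI * int (card I)) mod int N \<and>
     (int (r J) + 1) mod int N = (kJ * int (card J)) mod int N \<longrightarrow> kI = kJ"
proof (intro ballI allI impI)
  fix I J and kI kJ :: int
  assume I: "I \<in> cycle_supports N \<sigma>" and J: "J \<in> cycle_supports N \<sigma>"
    and k: "kI \<in> {1..int N - 1} \<and> kJ \<in> {1..int N - 1} \<and>
      (int (r I) + 1) mod int N = (kI * int (card I)) mod int N \<and>
      (int (r J) + 1) mod int N = (kJ * int (card J)) mod int N"
  interpret perm_range N \<sigma> using S_perms sigma_in by unfold_locales blast
  have N: "2 \<le> N" using prime by (rule prime_ge_2_nat)
  have dvd: "int N dvd int (card J) * (int (r I) + 1) - int (card I) * (int (r J) + 1)"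
    by (rule cycle_pair_dvd[OF N S_id r_bound invariant I J])
  have "int (r I) + 1 < int N" and "int (r J) + 1 < int N" using r_bound I J N by auto
  moreover have "prime (int N)" using prime by simp
  moreover have "kI \<in> {1..int N - 1}" and "kJ \<in> {1..int N - 1}"
    and "(int (r I) + 1) mod int N = (kI * int (card I)) mod int N"
    and "(int (r J) + 1) mod int N = (kJ * int (card J)) mod int N"
    using k by blast+
  ultimately show "kI = kJ" using cong_quotients_eq[OF _ _ _ _ _ _ _ _ _ dvd] by simp
qed

end
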